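(* Suppose (i) $G$ is a continuous distribution on $[0,\bar v]$ with density bounded below by some constant $L>0$, and (ii) for every $\lambda>0$, the set $\{v\in(0,\bar v]: r(v)/c(v)\ne\lambda\}$ has positive probability under $F$. If $\mathbb E_{v\sim F,p\sim G}[p\mathbf 1[v\ge p]]>\rho$, then \[\mathbb E_{\bm v,\bm p}\big[R^{\mathrm{pac}}(\bm v,\bm p)\big]-\mathbb E_{\bm v,\bm p,\bm\gamma}\big[R^{\mathrm{thr}}(\bm v,\bm p,\bm\gamma)\big]=\Theta(T).\]
   Context: Model: constants $\bar v>0$, $\rho\in(0,\bar v]$; $T$ rounds; budget $B=\rho T$. Values $v_t$ i.i.d. from $F$ on $[0,\bar v]$; highest competing bids $p_t$ i.i.d. from $G$ on $[0,\bar v]$, independent of values, unknown to the buyer. $r(v)=\mathbb E_{p\sim G}[(v-p)^+]$, $c(v)=\mathbb E_{p\sim G}[p\mathbf 1[v\ge p]]$. Throttling: each round the buyer chooses $x_t\in\{0,1\}$ after seeing $v_t$, receiving $x_t(v_t-p_t)^+$ and paying $x_tp_t\mathbf 1[v_t\ge p_t]$; an online throttling strategy sets $x_t=\beta_t(\mathcal H_t,v_t,\gamma_t)$ with internal randomness $\gamma_t$ and history of past values, decisions and observed competing bids (full information: all past $p_\tau$; partial information: $p_\tau$ only when $x_\tau=1$), keeping total payment within $B$; revenue $\sum_{t=1}^{T_0}x_t(v_t-p_t)^+$. $R^{\mathrm{thr}}$ is the revenue of the throttling strategy maximizing expected total revenue (expectation over $\bm v,\bm p,\bm\gamma$), under full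 or partial information. Pacing: $R^{\mathrm{pac}}$ is the revenue of the adaptive pacing strategy of Balseiro and Gur (2019): with step size $\varepsilon$ of order $T^{-1/2}$, multiplier cap $\bar\mu\ge\bar v/\rho$, initial $\mu_1\in[0,\bar\mu]$ and $\tilde B_1=B$, in each round it bids $b_t=\min\{v_t/(1+\mu_t),\tilde B_t\}$ in the second-price auction (winning iff $b_t\ge p_t$, then paying $p_t$ and gaining $v_t-p_t$), observes its expenditure $z_t=p_t\mathbf 1[b_t\ge p_t]$, and updates $\mu_{t+1}=\mathrm{Proj}_{[0,\bar\mu]}(\mu_t-\varepsilon(\rho-z_t))$, $\tilde B_{t+1}=\tilde B_t-z_t$. *)

theory Defs
  imports "HOL-Probability.Probability"
begin

definition rfun :: "real measure \<Rightarrow> real \<Rightarrow> real" where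
  "rfun G v = (\<integral>p. max (v - p) 0 \<partial>G)"

definition cfun :: "real measure \<Rightarrow> real \<Rightarrow> real" where
  "cfun G v = (\<integral>p. (if p \<le> v then p else 0) \<partial>G)"

(* distribution of one round: (value, highest competing bid, internal randomness gamma),
   with gamma uniform on [0,1] and all three independent *)
definition round_measure :: "real measure \<Rightarrow> real measure \<Rightarrow> (real \<times> real \<times> real) measure" where
  "round_measure F G = F \<Otimes>\<^sub>M (G \<Otimes>\<^sub>M uniform_measure lborel {0..1::real})"

definition rounds :: "real measure \<Rightarrow> real measure \<Rightarrow> nat \<Rightarrow> (nat \<Rightarrow> real \<times> real \<times> real) measure" where
  "rounds F G T = PiM {..<T} (\<lambda>_. round_measure F G)"

definition vals :: "(nat \<Rightarrow> real \<times> real \<times> real) \<Rightarrow> nat \<Rightarrow> real" where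
  "vals \<omega> t = fst (\<omega> t)"
definition bids :: "(nat \<Rightarrow> real \<times> real \<times> real) \<Rightarrow> nat \<Rightarrow> real" where
  "bids \<omega> t = fst (snd (\<omega> t))"
definition gams :: "(nat \<Rightarrow> real \<times> real \<times> real) \<Rightarrow> nat \<Rightarrow> real" where
  "gams \<omega> t = snd (snd (\<omega> t))"

(* history entry of a past round: (value, decision, observed competing bid or None) *)
type_synonym hist = "(real \<times> bool \<times> real option) list"

(* online throttling strategy: x_t = beta t H_t v_t gamma_t *)
type_synonym strategy = "nat \<Rightarrow> hist \<Rightarrow> real \<Rightarrow> real \<Rightarrow> bool"

(* full = True: full information (all past p observed);
   full = False: partial information (p observed only when x = 1) *)
fun thr_hist :: "bool \<Rightarrow> strategy \<Rightarrow> (nat \<Rightarrow> real) \<Rightarrow> (nat \<Rightarrow> real) \<Rightarrow> (nat \<Rightarrow> real) \<Rightarrow> nat \<Rightarrow> hist" where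
  "thr_hist full \<beta> v p \<gamma> 0 = []"
| "thr_hist full \<beta> v p \<gamma> (Suc t) =
     (let H = thr_hist full \<beta> v p \<gamma> t; x = \<beta> t H (v t) (\<gamma> t)
      in H @ [(v t, x, if full \<or> x then Some (p t) else None)])"

definition thr_x :: "bool \<Rightarrow> strategy \<Rightarrow> (nat \<Rightarrow> real) \<Rightarrow> (nat \<Rightarrow> real) \<Rightarrow> (nat \<Rightarrow> real) \<Rightarrow> nat \<Rightarrow> bool" where
  "thr_x full \<beta> v p \<gamma> t = \<beta> t (thr_hist full \<beta> v p \<gamma> t) (v t) (\<gamma> t)"

definition thr_payment :: "bool \<Rightarrow> strategy \<Rightarrow> (nat \<Rightarrow> real) \<Rightarrow> (nat \<Rightarrow> real) \<Rightarrow> (nat \<Rightarrow> real) \<Rightarrow> nat \<Rightarrow> real" where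
  "thr_payment full \<beta> v p \<gamma> T =
     (\<Sum>t<T. if thr_x full \<beta> v p \<gamma> t \<and> v t \<ge> p t then p t else 0)"

definition thr_revenue :: "bool \<Rightarrow> strategy \<Rightarrow> (nat \<Rightarrow> real) \<Rightarrow> (nat \<Rightarrow> real) \<Rightarrow> (nat \<Rightarrow> real) \<Rightarrow> nat \<Rightarrow> real" where
  "thr_revenue full \<beta> v p \<gamma> T =
     (\<Sum>t<T. if thr_x full \<beta> v p \<gamma> t then max (v t - p t) 0 else 0)"

definition thr_feasible :: "bool \<Rightarrow> strategy \<Rightarrow> real \<Rightarrow> nat \<Rightarrow> bool" where
  "thr_feasible full \<beta> B T = (\<forall>v p \<gamma>. thr_payment full \<beta> v p \<gamma> T \<le> B)"

definition thr_opt :: "bool \<Rightarrow> real measure \<Rightarrow> real measure \<Rightarrow> real \<Rightarrow> nat \<Rightarrow> real" where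
  "thr_opt full F G \<rho> T =
     Sup ((\<lambda>\<beta>. \<integral>\<omega>. thr_revenue full \<beta> (vals \<omega>) (bids \<omega>) (gams \<omega>) T \<partial>rounds F G T)
          ` {\<beta>. thr_feasible full \<beta> (\<rho> * real T) T})"

(* state (mu_t, remaining budget B~_t) at the start of round t *)
fun pac_state :: "real \<Rightarrow> real \<Rightarrow> real \<Rightarrow> real \<Rightarrow> real \<Rightarrow> (nat \<Rightarrow> real) \<Rightarrow> (nat \<Rightarrow> real) \<Rightarrow> nat \<Rightarrow> real \<times> real" where
  "pac_state \<epsilon> \<rho> \<mu>bar \<mu>1 B v p 0 = (\<mu>1, B)"
| "pac_state \<epsilon> \<rho> \<mu>bar \<mu>1 B v p (Suc t) =
     (let (\<mu>, Bt) = pac_state \<epsilon> \<rho> \<mu>bar \<mu>1 B v p t;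
          b = min (v t / (1 + \<mu>)) Bt;
          z = (if b \<ge> p t then p t else 0)
      in (max 0 (min \<mu>bar (\<mu> - \<epsilon> * (\<rho> - z))), Bt - z))"

definition pac_revenue :: "real \<Rightarrow> real \<Rightarrow> real \<Rightarrow> real \<Rightarrow> real \<Rightarrow> (nat \<Rightarrow> real) \<Rightarrow> (nat \<Rightarrow> real) \<Rightarrow> nat \<Rightarrow> real" where
  "pac_revenue \<epsilon> \<rho> \<mu>bar \<mu>1 B v p T =
     (\<Sum>t<T. let (\<mu>, Bt) = pac_state \<epsilon> \<rho> \<mu>bar \<mu>1 B v p t;
                b = min (v t / (1 + \<mu>)) Bt
            in if b \<ge> p t then v t - p t else 0)"

definition pac_exp :: "(nat \<Rightarrow> real) \<Rightarrow> real \<Rightarrow> real \<Rightarrow> real \<Rightarrow> real measure \<Rightarrow> real measure \<Rightarrow> nat \<Rightarrow> real" where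
  "pac_exp eps \<rho> \<mu>bar \<mu>1 F G T =
     (\<integral>\<omega>. pac_revenue (eps T) \<rho> \<mu>bar \<mu>1 (\<rho> * real T) (vals \<omega>) (bids \<omega>) T \<partial>rounds F G T)"

end

theory Submission
  imports Defs
begin

text \<open>Both strategies are compared through Lagrangian duals in the budget multiplier \<open>\<mu>\<close>.
  A throttling buyer decides before seeing the competing bid \<open>p\<close>, so relaxing the budget
  constraint bounds its expected revenue by \<open>T * thr_dual \<mu>\<close> for every \<open>\<mu> \<ge> 0\<close>, where only the
  positive part of the expected gain \<open>E\<^sub>p[(v - (1 + \<mu>) p) 1[p < v]]\<close> counts.  Adaptive pacing is
  online gradient descent on \<open>\<mu>\<close>; while its budget lasts, a round earns the gain
  \<open>(v - (1 + \<mu>) p)\<^sup>+\<close> plus \<open>\<mu>\<close> times the spend, which yields expected revenue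
  \<open>T * min pac_dual - O(\<surd>T)\<close> over \<open>[0, \<mu>bar]\<close>.  The expected spend at \<open>\<mu> = 0\<close> exceeds \<open>\<rho>\<close>, so
  the pacing dual is minimised at some \<open>\<mu>\<^sub>0 > 0\<close>, and there, because \<open>G\<close> has a density bounded
  below, \<open>thr_dual \<mu>\<^sub>0 < pac_dual \<mu>\<^sub>0\<close>.  The upper bound is trivial, since a round earns at most
  \<open>vbar\<close>.\<close>

lemma (in product_sigma_finite) product_integrable_insert_section:
  fixes f :: "_ \<Rightarrow> real"
  assumes I: "finite I" "i \<notin> I" and f: "integrable (Pi\<^sub>M (insert i I) M) f"
  shows "integrable (Pi\<^sub>M I M) (\<lambda>x. \<integral>y. f (x(i := y)) \<partial>M i)"
proof -
  interpret I: finite_product_sigma_finite M I by standard fact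
  interpret i: finite_product_sigma_finite M "{i}" by standard simp
  interpret P: pair_sigma_finite "Pi\<^sub>M I M" "Pi\<^sub>M {i} M" ..
  have "integrable (Pi\<^sub>M I M \<Otimes>\<^sub>M Pi\<^sub>M {i} M) (\<lambda>z. f (merge I {i} z))"
  proof (rule integrable_distr[OF measurable_merge])
    have "distr (Pi\<^sub>M I M \<Otimes>\<^sub>M Pi\<^sub>M {i} M) (Pi\<^sub>M (I \<union> {i}) M) (merge I {i}) = Pi\<^sub>M (insert i I) M"
      using distr_merge[of I "{i}"] I by simp
    then show "integrable (distr (Pi\<^sub>M I M \<Otimes>\<^sub>M Pi\<^sub>M {i} M) (Pi\<^sub>M (I \<union> {i}) M) (merge I {i})) f"
      using f by simp
  qed
  then have merged: "integrable (Pi\<^sub>M I M) (\<lambda>x. \<integral>y. f (merge I {i} (x, y)) \<partial>Pi\<^sub>M {i} M)"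
    by (rule P.integrable_fst')
  have eq: "(\<integral>y. f (merge I {i} (x, y)) \<partial>Pi\<^sub>M {i} M) = (\<integral>y. f (x(i := y)) \<partial>M i)"
    if x: "x \<in> space (Pi\<^sub>M I M)" for x
  proof -
    have "(\<lambda>y. f (x(i := y))) \<in> borel_measurable (M i)"
      using measurable_comp[OF measurable_component_update borel_measurable_integrable[OF f], OF x I(2)]
      unfolding comp_def .
    then have "(\<integral>y. f (x(i := y)) \<partial>M i) = (\<integral>y. f (x(i := y i)) \<partial>Pi\<^sub>M {i} M)"
      by (rule product_integral_singleton[symmetric])
    also have "\<dots> = (\<integral>y. f (merge I {i} (x, y)) \<partial>Pi\<^sub>M {i} M)"
      using x I by (intro Bochner_Integration.integral_cong refl arg_cong[where f=f])
        (auto simp: merge_def space_PiM extensional_def PiE_def fun_eq_iff)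
    finally show ?thesis by simp
  qed
  have "integrable (Pi\<^sub>M I M) (\<lambda>x. \<integral>y. f (merge I {i} (x, y)) \<partial>Pi\<^sub>M {i} M)
      \<longleftrightarrow> integrable (Pi\<^sub>M I M) (\<lambda>x. \<integral>y. f (x(i := y)) \<partial>M i)"
    by (rule Bochner_Integration.integrable_cong) (simp_all add: eq)
  with merged show ?thesis by simp
qed

lemma product_integral_insert_le:
  fixes M :: "'i \<Rightarrow> 'a measure" and f :: "('i \<Rightarrow> 'a) \<Rightarrow> real"
  assumes M: "\<And>j. prob_space (M j)" and I: "finite I" "i \<notin> I"
    and f: "integrable (Pi\<^sub>M (insert i I) M) f"
    and le: "\<And>x. x \<in> space (Pi\<^sub>M I M) \<Longrightarrow> (\<integral>y. f (x(i := y)) \<partial>M i) \<le> c"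
  shows "integral\<^sup>L (Pi\<^sub>M (insert i I) M) f \<le> c"
proof -
  interpret product_sigma_finite M
    by (simp add: product_sigma_finite_def M prob_space_imp_sigma_finite)
  interpret PI: prob_space "Pi\<^sub>M I M" by (rule prob_space_PiM[OF M])
  show ?thesis
    unfolding product_integral_insert[OF I f]
    by (intro PI.integral_le_const product_integrable_insert_section[OF I f] AE_I2 le)
qed

lemma product_integral_insert_ge:
  fixes M :: "'i \<Rightarrow> 'a measure" and f :: "('i \<Rightarrow> 'a) \<Rightarrow> real"
  assumes M: "\<And>j. prob_space (M j)" and I: "finite I" "i \<notin> I"
    and f: "integrable (Pi\<^sub>M (insert i I) M) f"
    and ge: "\<And>x. x \<in> space (Pi\<^sub>M I M) \<Longrightarrow> c \<le> (\<integral>y. f (x(i := y)) \<partial>M i)"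
  shows "c \<le> integral\<^sup>L (Pi\<^sub>M (insert i I) M) f"
proof -
  interpret product_sigma_finite M
    by (simp add: product_sigma_finite_def M prob_space_imp_sigma_finite)
  interpret PI: prob_space "Pi\<^sub>M I M" by (rule prob_space_PiM[OF M])
  show ?thesis
    unfolding product_integral_insert[OF I f]
    by (intro PI.integral_ge_const product_integrable_insert_section[OF I f] AE_I2 ge)
qed

lemma mult_sqrt_le_half_linear:
  fixes C \<delta> x :: real
  assumes \<delta>: "0 < \<delta>" and x: "(2 * C / \<delta>)\<^sup>2 \<le> x"
  shows "C * sqrt x \<le> \<delta> / 2 * x"
proof -
  have "0 \<le> x" using x by (meson order_trans zero_le_power2)
  have "2 * C / \<delta> \<le> sqrt x" using x by (rule real_le_rsqrt)
  then have "C \<le> \<delta> / 2 * sqrt x" using \<delta> by (simp add: field_simps)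
  then have "C * sqrt x \<le> \<delta> / 2 * sqrt x * sqrt x" using \<open>0 \<le> x\<close> by (intro mult_right_mono) auto
  also have "\<dots> = \<delta> / 2 * x" using \<open>0 \<le> x\<close> by simp
  finally show ?thesis .
qed

lemma pacing_loss_le_sqrt:
  fixes s \<epsilon> m a1 a2 vbar \<rho> \<mu>bar :: real
  assumes s: "1 \<le> s" and eps: "a1 / s \<le> \<epsilon>" "\<epsilon> \<le> a2 / s"
    and pos: "0 < a1" "0 < \<rho>" "0 \<le> vbar" "0 \<le> \<mu>bar" "0 \<le> m"
  shows "s\<^sup>2 * m - ((vbar / \<rho> + 1) * m + \<mu>bar * m / (\<rho> * a1) + \<mu>bar\<^sup>2 / (2 * a1) + a2 * vbar\<^sup>2 / 2) * s
    \<le> (s\<^sup>2 - (vbar + \<mu>bar / \<epsilon>) / \<rho> - 1) * m - \<mu>bar\<^sup>2 / (2 * \<epsilon>) - s\<^sup>2 * \<epsilon> * vbar\<^sup>2 / 2"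
proof -
  have "0 < a1 / s" using pos s by simp
  then have "0 < \<epsilon>" using eps(1) by linarith
  moreover have "a1 \<le> \<epsilon> * s" using eps(1) s by (simp add: pos_divide_le_eq)
  ultimately have \<epsilon>: "1 / \<epsilon> \<le> s / a1" using pos by (simp add: field_simps)
  define N where "N = s\<^sup>2 - (vbar + \<mu>bar / \<epsilon>) / \<rho> - 1"
  have "N * m = s\<^sup>2 * m - (vbar / \<rho> + 1) * m - \<mu>bar * m / \<rho> * (1 / \<epsilon>)"
    using pos by (simp add: N_def field_simps)
  moreover have "(vbar / \<rho> + 1) * m \<le> (vbar / \<rho> + 1) * m * s"
    using mult_left_mono[OF s, of "(vbar / \<rho> + 1) * m"] pos by simp
  moreover have "\<mu>bar * m / \<rho> * (1 / \<epsilon>) \<le> \<mu>bar * m / \<rho> * (s / a1)"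
    using \<epsilon> pos by (intro mult_left_mono) auto
  moreover have "\<mu>bar\<^sup>2 / (2 * \<epsilon>) \<le> \<mu>bar\<^sup>2 / 2 * (s / a1)"
    using mult_left_mono[OF \<epsilon>, of "\<mu>bar\<^sup>2 / 2"] by simp
  moreover have "s\<^sup>2 * \<epsilon> * vbar\<^sup>2 / 2 \<le> s\<^sup>2 * (a2 / s) * vbar\<^sup>2 / 2"
    using eps by (intro divide_right_mono mult_right_mono mult_left_mono) auto
  moreover have "((vbar / \<rho> + 1) * m + \<mu>bar * m / (\<rho> * a1) + \<mu>bar\<^sup>2 / (2 * a1) + a2 * vbar\<^sup>2 / 2) * s
      = (vbar / \<rho> + 1) * m * s + \<mu>bar * m / \<rho> * (s / a1) + \<mu>bar\<^sup>2 / 2 * (s / a1)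
        + s\<^sup>2 * (a2 / s) * vbar\<^sup>2 / 2"
    using s by (simp add: field_simps power2_eq_square)
  ultimately show ?thesis unfolding N_def[symmetric] by linarith
qed

lemma step_size_bounds:
  fixes s \<epsilon> a1 a2 vbar \<rho> \<mu>bar :: real
  assumes pos: "0 < a1" "0 < \<rho>" "0 \<le> vbar" "0 \<le> \<mu>bar"
    and s: "1 \<le> s" "a2 * vbar \<le> s" "2 * \<mu>bar / (\<rho> * a1) \<le> s" and eps: "a1 / s \<le> \<epsilon>" "\<epsilon> \<le> a2 / s"
    and vbar: "2 * vbar / \<rho> \<le> s\<^sup>2"
  shows "0 < \<epsilon>" "\<epsilon> * vbar \<le> 1" "vbar + \<mu>bar / \<epsilon> \<le> \<rho> * s\<^sup>2"
proof -
  have "0 < a1 / s" using pos s by simp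
  then show \<epsilon>: "0 < \<epsilon>" using eps by linarith
  have "\<epsilon> * vbar \<le> a2 / s * vbar" using eps pos by (intro mult_right_mono) auto
  also have "\<dots> \<le> 1" using s by (simp add: field_simps)
  finally show "\<epsilon> * vbar \<le> 1" .
  have "\<mu>bar * a1 \<le> \<mu>bar * (\<epsilon> * s)"
    using eps(1) s pos by (intro mult_left_mono) (auto simp: pos_divide_le_eq)
  then have "\<mu>bar / \<epsilon> \<le> \<mu>bar * s / a1" using \<epsilon> pos by (simp add: field_simps)
  also have "\<dots> \<le> \<rho> * s\<^sup>2 / 2"
    using s(3) s(1) pos by (simp add: field_simps power2_eq_square)
  finally have "\<mu>bar / \<epsilon> \<le> \<rho> * s\<^sup>2 / 2" .
  moreover have "vbar \<le> \<rho> * s\<^sup>2 / 2" using vbar pos by (simp add: field_simps)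
  ultimately show "vbar + \<mu>bar / \<epsilon> \<le> \<rho> * s\<^sup>2" by linarith
qed

lemma eventually_margin_cutoff:
  fixes p v :: real
  assumes "0 \<le> p"
  shows "\<forall>\<^sub>F n in sequentially. (if (1 + 1 / real (Suc n)) * p \<le> v then p else 0) = (if p < v then p else 0)"
proof (cases "0 < p")
  case True
  have above: "p < (1 + 1 / real (Suc n)) * p" for n
    using True by (simp add: distrib_right)
  show ?thesis
  proof (cases "p < v")
    case True
    have "(\<lambda>n. (1 + 1 / real (Suc n)) * p) \<longlonglongrightarrow> (1 + 0) * p"
      using LIMSEQ_inverse_real_of_nat by (intro tendsto_intros) (simp add: inverse_eq_divide)
    then have "\<forall>\<^sub>F n in sequentially. (1 + 1 / real (Suc n)) * p < v"
      using True by (intro order_tendstoD(2)) auto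
    then show ?thesis by eventually_elim (use True in auto)
  next
    case False
    then have "\<not> (1 + 1 / real (Suc n)) * p \<le> v" for n using above[of n] by linarith
    then show ?thesis using False by simp
  qed
qed (use assms in simp)

definition pac_gain :: "real \<Rightarrow> real \<Rightarrow> real \<Rightarrow> real" where
  "pac_gain \<mu> v p = max (v - (1 + \<mu>) * p) 0"

definition thr_gain :: "real \<Rightarrow> real \<Rightarrow> real \<Rightarrow> real" where
  "thr_gain \<mu> v p = (if p < v then v - (1 + \<mu>) * p else 0)"

lemma abs_thr_gain_le: "0 \<le> \<mu> \<Longrightarrow> 0 \<le> p \<Longrightarrow> p \<le> c \<Longrightarrow> \<bar>thr_gain \<mu> v p\<bar> \<le> \<bar>v\<bar> + (1 + \<mu>) * c"
  unfolding thr_gain_def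
  by (auto intro!: abs_triangle_ineq4[THEN order_trans] add_mono mult_left_mono simp: abs_mult)

lemma pac_gain_nonneg: "0 \<le> pac_gain \<mu> v p"
  by (simp add: pac_gain_def)

lemma pac_gain_le: "0 \<le> \<mu> \<Longrightarrow> 0 \<le> p \<Longrightarrow> 0 \<le> v \<Longrightarrow> pac_gain \<mu> v p \<le> v"
  by (simp add: pac_gain_def mult_nonneg_nonneg)

lemma abs_pac_gain_diff_le: "\<bar>pac_gain a v p - pac_gain b v p\<bar> \<le> \<bar>a - b\<bar> * \<bar>p\<bar>"
proof -
  have "\<bar>pac_gain a v p - pac_gain b v p\<bar> \<le> \<bar>(v - (1 + a) * p) - (v - (1 + b) * p)\<bar>"
    unfolding pac_gain_def by (simp add: max_def abs_if)
  also have "\<dots> = \<bar>(b - a) * p\<bar>" by (simp add: algebra_simps)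
  also have "\<dots> = \<bar>a - b\<bar> * \<bar>p\<bar>" by (simp add: abs_mult abs_minus_commute)
  finally show ?thesis .
qed

lemma pac_gain_le_margin:
  assumes "0 \<le> \<delta>" "0 \<le> p"
  shows "pac_gain \<delta> v p \<le> pac_gain 0 v p - \<delta> * (if (1 + \<delta>) * p \<le> v then p else 0)"
  using assms mult_nonneg_nonneg[OF assms] by (auto simp: pac_gain_def algebra_simps)

section \<open>Pacing along a fixed sequence of rounds\<close>

lemma pac_state_local:
  "(\<And>s. s < t \<Longrightarrow> v s = v' s \<and> p s = p' s) \<Longrightarrow>
   pac_state \<epsilon> \<rho> \<mu>bar \<mu>1 B v p t = pac_state \<epsilon> \<rho> \<mu>bar \<mu>1 B v' p' t"
  by (induction t) (simp_all add: Let_def split_beta)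

context
  fixes \<epsilon> \<rho> \<mu>bar \<mu>1 B :: real and v p :: "nat \<Rightarrow> real"
begin

definition pac_mu :: "nat \<Rightarrow> real" where
  "pac_mu t = fst (pac_state \<epsilon> \<rho> \<mu>bar \<mu>1 B v p t)"

definition pac_budget :: "nat \<Rightarrow> real" where
  "pac_budget t = snd (pac_state \<epsilon> \<rho> \<mu>bar \<mu>1 B v p t)"

definition pac_bid :: "nat \<Rightarrow> real" where
  "pac_bid t = min (v t / (1 + pac_mu t)) (pac_budget t)"

definition pac_spend :: "nat \<Rightarrow> real" where
  "pac_spend t = (if pac_bid t \<ge> p t then p t else 0)"

lemma pac_mu_0: "pac_mu 0 = \<mu>1"
  by (simp add: pac_mu_def)

lemma pac_mu_Suc: "pac_mu (Suc t) = max 0 (min \<mu>bar (pac_mu t - \<epsilon> * (\<rho> - pac_spend t)))"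
  by (simp add: pac_mu_def pac_spend_def pac_bid_def pac_budget_def Let_def split_beta)

lemma pac_budget_Suc: "pac_budget (Suc t) = pac_budget t - pac_spend t"
  by (simp add: pac_budget_def pac_spend_def pac_bid_def pac_mu_def Let_def split_beta)

lemma pac_budget_eq: "pac_budget n = B - (\<Sum>t<n. pac_spend t)"
  by (induction n) (simp_all add: pac_budget_Suc, simp add: pac_budget_def)

lemma pac_revenue_eq:
  "pac_revenue \<epsilon> \<rho> \<mu>bar \<mu>1 B v p T = (\<Sum>t<T. if pac_bid t \<ge> p t then v t - p t else 0)"
  by (simp add: pac_revenue_def pac_mu_def pac_budget_def pac_bid_def Let_def split_beta)

lemma pac_mu_range: "0 \<le> \<mu>1 \<Longrightarrow> \<mu>1 \<le> \<mu>bar \<Longrightarrow> 0 \<le> pac_mu t \<and> pac_mu t \<le> \<mu>bar"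
  by (cases t) (auto simp: pac_mu_0 pac_mu_Suc)

context
  fixes vbar :: real and T :: nat
  assumes vp: "\<forall>t<T. v t \<in> {0..vbar} \<and> p t \<in> {0..vbar}"
    and eps: "\<epsilon> > 0" "\<epsilon> * vbar \<le> 1"
    and rho: "0 < \<rho>" "\<rho> \<le> vbar"
    and mubar: "\<mu>bar \<ge> vbar / \<rho>" and mu1: "0 \<le> \<mu>1" "\<mu>1 \<le> \<mu>bar"
begin

lemma pac_spend_bounds:
  assumes "t < T"
  shows "0 \<le> pac_spend t" "pac_spend t \<le> vbar" "pac_spend t \<le> v t / (1 + pac_mu t)"
  using vp assms pac_mu_range[OF mu1, of t] by (auto simp: pac_spend_def pac_bid_def)

text \<open>The cap \<open>\<mu>bar \<ge> vbar / \<rho>\<close> is never hit: once \<open>1 + \<mu> \<ge> vbar / \<rho>\<close>, the bid and hence the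
  spend are at most \<open>\<rho>\<close>, so the multiplier cannot increase.\<close>

lemma pac_mu_Suc_uncapped:
  assumes t: "t < T"
  shows "pac_mu (Suc t) = max 0 (pac_mu t + \<epsilon> * (pac_spend t - \<rho>))"
proof -
  have "pac_mu t - \<epsilon> * (\<rho> - pac_spend t) \<le> \<mu>bar"
  proof (cases "pac_mu t \<ge> vbar / \<rho> - 1")
    case True
    have "v t / (1 + pac_mu t) \<le> vbar / (vbar / \<rho>)"
      using True vp t rho pac_mu_range[OF mu1, of t] by (intro frac_le) auto
    also have "\<dots> = \<rho>" using rho by simp
    finally have "\<epsilon> * (\<rho> - pac_spend t) \<ge> 0"
      using pac_spend_bounds[OF t] eps by simp
    then show ?thesis using pac_mu_range[OF mu1, of t] by linarith
  next
    case False
    have "\<epsilon> * (pac_spend t - \<rho>) \<le> \<epsilon> * vbar"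
      using pac_spend_bounds[OF t] rho eps by (intro mult_left_mono) auto
    then show ?thesis using False eps mubar by (simp add: algebra_simps)
  qed
  then show ?thesis by (simp add: pac_mu_Suc algebra_simps)
qed

lemma pac_overspend_le: "n \<le> T \<Longrightarrow> \<epsilon> * (\<Sum>t<n. pac_spend t - \<rho>) \<le> pac_mu n - \<mu>1"
proof (induction n)
  case (Suc n)
  then show ?case
    using pac_mu_Suc_uncapped[of n] by (simp add: algebra_simps)
qed (simp add: pac_mu_0)

lemma pac_multiplier_regret:
  "n \<le> T \<Longrightarrow> ((pac_mu n)\<^sup>2 - \<mu>1\<^sup>2) / (2 * \<epsilon>) - real n * \<epsilon> * vbar\<^sup>2 / 2
     \<le> (\<Sum>t<n. pac_mu t * (pac_spend t - \<rho>))"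
proof (induction n)
  case 0 then show ?case by (simp add: pac_mu_0)
next
  case (Suc n)
  have n: "n < T" using Suc.prems by simp
  define d where "d = pac_spend n - \<rho>"
  have "\<bar>d\<bar> \<le> vbar" using pac_spend_bounds[OF n] rho unfolding d_def by auto
  then have d2: "d\<^sup>2 \<le> vbar\<^sup>2" using power_mono[of "\<bar>d\<bar>" vbar 2] by simp
  have "(pac_mu (Suc n))\<^sup>2 \<le> (pac_mu n + \<epsilon> * d)\<^sup>2"
    unfolding pac_mu_Suc_uncapped[OF n] d_def[symmetric] by (simp add: max_def)
  also have "\<dots> = (pac_mu n)\<^sup>2 + 2 * \<epsilon> * (pac_mu n * d) + \<epsilon>\<^sup>2 * d\<^sup>2"
    by (simp add: power2_eq_square algebra_simps)
  also have "\<epsilon>\<^sup>2 * d\<^sup>2 \<le> \<epsilon>\<^sup>2 * vbar\<^sup>2" using d2 by (intro mult_left_mono) auto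
  finally have step: "((pac_mu (Suc n))\<^sup>2 - (pac_mu n)\<^sup>2) / (2 * \<epsilon>) - \<epsilon> * vbar\<^sup>2 / 2 \<le> pac_mu n * d"
    using eps by (simp add: field_simps power2_eq_square)
  have "((pac_mu (Suc n))\<^sup>2 - \<mu>1\<^sup>2) / (2 * \<epsilon>) - real (Suc n) * \<epsilon> * vbar\<^sup>2 / 2
     = (((pac_mu n)\<^sup>2 - \<mu>1\<^sup>2) / (2 * \<epsilon>) - real n * \<epsilon> * vbar\<^sup>2 / 2)
       + (((pac_mu (Suc n))\<^sup>2 - (pac_mu n)\<^sup>2) / (2 * \<epsilon>) - \<epsilon> * vbar\<^sup>2 / 2)"
    using eps by (simp add: field_simps)
  then show ?case
    unfolding sum.lessThan_Suc d_def using Suc n step by (simp add: d_def)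
qed

lemma pac_bid_le_value: "t < T \<Longrightarrow> v t / (1 + pac_mu t) \<le> v t"
  using vp pac_mu_range[OF mu1, of t] by (simp add: divide_le_eq algebra_simps)

lemma pac_round_revenue_nonneg:
  "t < T \<Longrightarrow> 0 \<le> (if pac_bid t \<ge> p t then v t - p t else 0)"
  using pac_bid_le_value[of t] by (auto simp: pac_bid_def)

lemma pac_budget_ge: "t \<le> T \<Longrightarrow> B - \<rho> * t - \<mu>bar / \<epsilon> \<le> pac_budget t"
proof -
  assume t: "t \<le> T"
  have "\<epsilon> * (\<Sum>s<t. pac_spend s - \<rho>) \<le> \<mu>bar"
    using pac_overspend_le[OF t] pac_mu_range[OF mu1, of t] mu1 by linarith
  then have "(\<Sum>s<t. pac_spend s - \<rho>) \<le> \<mu>bar / \<epsilon>"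
    using eps by (simp add: field_simps)
  then show ?thesis by (simp add: pac_budget_eq sum_subtractf algebra_simps)
qed

lemma pac_round_revenue_eq:
  assumes t: "t < T" and budget: "vbar \<le> pac_budget t"
  shows "(if pac_bid t \<ge> p t then v t - p t else 0) = pac_gain (pac_mu t) (v t) (p t) + pac_mu t * pac_spend t"
proof -
  have mu: "0 \<le> pac_mu t" using pac_mu_range[OF mu1] by blast
  have "v t / (1 + pac_mu t) \<le> vbar"
    using vp t pac_bid_le_value[OF t] by force
  then have bid: "pac_bid t = v t / (1 + pac_mu t)"
    using budget by (simp add: pac_bid_def)
  have "p t \<le> v t / (1 + pac_mu t) \<longleftrightarrow> (1 + pac_mu t) * p t \<le> v t"
    using mu by (simp add: le_divide_eq algebra_simps)
  then show ?thesis by (auto simp: bid pac_spend_def pac_gain_def algebra_simps)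
qed

lemma pac_revenue_ge:
  assumes N: "N \<le> T" "\<rho> * real N + \<mu>bar / \<epsilon> + vbar \<le> B"
  shows "(\<Sum>t<N. pac_gain (pac_mu t) (v t) (p t) + pac_mu t * \<rho>) - \<mu>bar\<^sup>2 / (2 * \<epsilon>) - real N * \<epsilon> * vbar\<^sup>2 / 2
    \<le> pac_revenue \<epsilon> \<rho> \<mu>bar \<mu>1 B v p T"
proof -
  have "vbar \<le> pac_budget t" if t: "t < N" for t
  proof -
    have "\<rho> * t \<le> \<rho> * N" using t rho by simp
    then show ?thesis using pac_budget_ge[of t] t N by linarith
  qed
  then have "(\<Sum>t<N. if pac_bid t \<ge> p t then v t - p t else 0)
      = (\<Sum>t<N. pac_gain (pac_mu t) (v t) (p t) + pac_mu t * \<rho>) + (\<Sum>t<N. pac_mu t * (pac_spend t - \<rho>))"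
    using N by (simp add: pac_round_revenue_eq sum.distrib[symmetric] algebra_simps)
  moreover have "(\<Sum>t<N. if pac_bid t \<ge> p t then v t - p t else 0) \<le> pac_revenue \<epsilon> \<rho> \<mu>bar \<mu>1 B v p T"
    unfolding pac_revenue_eq using N pac_round_revenue_nonneg by (intro sum_mono2) auto
  moreover have "- \<mu>bar\<^sup>2 \<le> (pac_mu N)\<^sup>2 - \<mu>1\<^sup>2"
    using mu1 power_mono[of \<mu>1 \<mu>bar 2] zero_le_power2[of "pac_mu N"] by linarith
  then have "- \<mu>bar\<^sup>2 / (2 * \<epsilon>) \<le> ((pac_mu N)\<^sup>2 - \<mu>1\<^sup>2) / (2 * \<epsilon>)"
    using eps divide_right_mono[of "- \<mu>bar\<^sup>2" _ "2 * \<epsilon>"] by simp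
  ultimately show ?thesis
    using pac_multiplier_regret[OF N(1)] by linarith
qed

end

end

section \<open>Throttling along a fixed sequence of rounds\<close>

lemma thr_hist_local:
  "(\<And>s. s < t \<Longrightarrow> v s = v' s \<and> p s = p' s \<and> \<gamma> s = \<gamma>' s) \<Longrightarrow>
   thr_hist full \<beta> v p \<gamma> t = thr_hist full \<beta> v' p' \<gamma>' t"
proof (induction t)
  case (Suc t)
  then have "thr_hist full \<beta> v p \<gamma> t = thr_hist full \<beta> v' p' \<gamma>' t" by simp
  moreover have "v t = v' t" "p t = p' t" "\<gamma> t = \<gamma>' t" using Suc.prems by auto
  ultimately show ?case by (simp only: thr_hist.simps Let_def)
qed simp

lemma thr_x_local:
  "(\<And>s. s < t \<Longrightarrow> v s = v' s \<and> p s = p' s \<and> \<gamma> s = \<gamma>' s) \<Longrightarrow> v t = v' t \<Longrightarrow> \<gamma> t = \<gamma>' t \<Longrightarrow>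
   thr_x full \<beta> v p \<gamma> t = thr_x full \<beta> v' p' \<gamma>' t"
  unfolding thr_x_def using thr_hist_local[of t v v' p p' \<gamma> \<gamma>' full \<beta>] by simp

lemma thr_revenue_le_lagrangian:
  assumes feasible: "thr_payment full \<beta> v p \<gamma> T \<le> B" and p: "\<And>t. t < T \<Longrightarrow> 0 \<le> p t" and \<mu>: "0 \<le> \<mu>"
  shows "thr_revenue full \<beta> v p \<gamma> T
    \<le> \<mu> * B + (\<Sum>t<T. if thr_x full \<beta> v p \<gamma> t then thr_gain \<mu> (v t) (p t) else 0)"
proof -
  let ?won = "\<lambda>t. thr_x full \<beta> v p \<gamma> t \<and> p t < v t"
  have "(\<Sum>t<T. if ?won t then p t else 0) \<le> thr_payment full \<beta> v p \<gamma> T"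
    unfolding thr_payment_def using p by (intro sum_mono) auto
  then have "\<mu> * (\<Sum>t<T. if ?won t then p t else 0) \<le> \<mu> * B"
    using feasible \<mu> by (intro mult_left_mono) auto
  moreover have "thr_revenue full \<beta> v p \<gamma> T
      = (\<Sum>t<T. if thr_x full \<beta> v p \<gamma> t then thr_gain \<mu> (v t) (p t) else 0) + \<mu> * (\<Sum>t<T. if ?won t then p t else 0)"
    unfolding thr_revenue_def sum_distrib_left sum.distrib[symmetric]
    by (intro sum.cong) (auto simp: thr_gain_def algebra_simps)
  ultimately show ?thesis by simp
qed

text \<open>Strategies need not be measurable.  Measurability of the per-round gains is recovered from
  that of the total revenue by muting rounds: from round \<open>n\<close> on the competing bid is raised above
  the value, so these rounds earn nothing; \<open>undefined\<close> keeps the result extensional on \<open>{..<T}\<close>.\<close>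

definition mute_rounds :: "nat \<Rightarrow> nat \<Rightarrow> (nat \<Rightarrow> real \<times> real \<times> real) \<Rightarrow> nat \<Rightarrow> real \<times> real \<times> real" where
  "mute_rounds T n \<omega> = (\<lambda>s. if s < T then if s < n then \<omega> s else (fst (\<omega> s), fst (\<omega> s) + 1, snd (snd (\<omega> s)))
                              else undefined)"

lemma thr_revenue_mute_rounds:
  assumes n: "n \<le> T"
  shows "thr_revenue full \<beta> (vals (mute_rounds T n \<omega>)) (bids (mute_rounds T n \<omega>)) (gams (mute_rounds T n \<omega>)) T
    = thr_revenue full \<beta> (vals \<omega>) (bids \<omega>) (gams \<omega>) n"
proof -
  let ?\<omega>' = "mute_rounds T n \<omega>"
  have same: "vals ?\<omega>' t = vals \<omega> t" "bids ?\<omega>' t = bids \<omega> t" if "t < n" for t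
    using that n by (auto simp: mute_rounds_def vals_def bids_def)
  have early: "thr_x full \<beta> (vals ?\<omega>') (bids ?\<omega>') (gams ?\<omega>') t = thr_x full \<beta> (vals \<omega>) (bids \<omega>) (gams \<omega>) t"
    if "t < n" for t
    by (rule thr_x_local) (use that n in \<open>auto simp: mute_rounds_def vals_def bids_def gams_def\<close>)
  have "thr_revenue full \<beta> (vals ?\<omega>') (bids ?\<omega>') (gams ?\<omega>') T = thr_revenue full \<beta> (vals ?\<omega>') (bids ?\<omega>') (gams ?\<omega>') n"
    unfolding thr_revenue_def using n
    by (intro sum.mono_neutral_right) (auto simp: mute_rounds_def vals_def bids_def)
  also have "\<dots> = thr_revenue full \<beta> (vals \<omega>) (bids \<omega>) (gams \<omega>) n"
    unfolding thr_revenue_def using n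
    by (intro sum.cong) (simp_all add: early same)
  finally show ?thesis .
qed

section \<open>The probability model\<close>

locale auction_setting =
  fixes F G :: "real measure" and vbar \<rho> :: real
  assumes vbar_pos: "vbar > 0" and rho_pos: "0 < \<rho>" and rho_le: "\<rho> \<le> vbar"
    and F_prob: "prob_space F" and F_sets: "sets F = sets borel"
    and F_supp: "measure F {0..vbar} = 1"
    and G_prob: "prob_space G" and G_sets: "sets G = sets borel"
    and G_supp: "measure G {0..vbar} = 1"
begin

abbreviation "U \<equiv> uniform_measure lborel {0..1::real}"
abbreviation "R \<equiv> round_measure F G"
abbreviation "K \<equiv> F \<Otimes>\<^sub>M G"
abbreviation "\<Omega> T \<equiv> rounds F G T"

sublocale F: prob_space F by (rule F_prob)
sublocale G: prob_space G by (rule G_prob)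
sublocale U: prob_space U by (rule prob_space_uniform_measure) auto
sublocale GU: pair_prob_space G U ..
sublocale K: pair_prob_space F G ..
sublocale FGU: pair_prob_space F "G \<Otimes>\<^sub>M U" ..

sublocale R: prob_space R
  unfolding round_measure_def by (rule FGU.prob_space_axioms)

sublocale \<Omega>: prob_space "\<Omega> T" for T
  unfolding rounds_def using R.prob_space_axioms by (intro prob_space_PiM)

lemma sets_R[measurable_cong]: "sets R = sets (borel \<Otimes>\<^sub>M (borel \<Otimes>\<^sub>M borel))"
  unfolding round_measure_def by (intro sets_pair_measure_cong F_sets G_sets) auto

lemma sets_GU[measurable_cong]: "sets (G \<Otimes>\<^sub>M U) = sets (borel \<Otimes>\<^sub>M borel)"
  by (intro sets_pair_measure_cong G_sets) auto

lemma sets_K[measurable_cong]: "sets K = sets (borel \<Otimes>\<^sub>M borel)"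
  by (intro sets_pair_measure_cong F_sets G_sets)

lemmas [measurable_cong] = F_sets G_sets

lemma space_F: "space F = UNIV"
  using sets_eq_imp_space_eq[OF F_sets] by simp

lemma AE_F: "AE v in F. v \<in> {0..vbar}"
  using F_supp by (intro F.AE_prob_1) (auto simp: F_sets)

lemma AE_G: "AE p in G. p \<in> {0..vbar}"
  using G_supp by (intro G.AE_prob_1) (auto simp: G_sets)

lemma AE_K: "AE x in K. fst x \<in> {0..vbar} \<and> snd x \<in> {0..vbar}"
proof (rule K.AE_pair_measure)
  show "{x \<in> space K. fst x \<in> {0..vbar} \<and> snd x \<in> {0..vbar}} \<in> sets K" by measurable
  show "AE v in F. AE p in G. fst (v, p) \<in> {0..vbar} \<and> snd (v, p) \<in> {0..vbar}"
    using AE_F by eventually_elim (use AE_G in auto)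
qed

lemma AE_GU: "AE z in G \<Otimes>\<^sub>M U. fst z \<in> {0..vbar}"
proof (rule GU.AE_pair_measure)
  show "{z \<in> space (G \<Otimes>\<^sub>M U). fst z \<in> {0..vbar}} \<in> sets (G \<Otimes>\<^sub>M U)" by measurable
  show "AE p in G. AE \<gamma> in U. fst (p, \<gamma>) \<in> {0..vbar}" using AE_G by eventually_elim simp
qed

lemma AE_R: "AE y in R. fst y \<in> {0..vbar} \<and> fst (snd y) \<in> {0..vbar}"
  unfolding round_measure_def
proof (rule FGU.AE_pair_measure)
  show "{y \<in> space (F \<Otimes>\<^sub>M (G \<Otimes>\<^sub>M U)). fst y \<in> {0..vbar} \<and> fst (snd y) \<in> {0..vbar}}
    \<in> sets (F \<Otimes>\<^sub>M (G \<Otimes>\<^sub>M U))"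
    using sets_R unfolding round_measure_def by measurable
  show "AE v in F. AE z in G \<Otimes>\<^sub>M U. fst (v, z) \<in> {0..vbar} \<and> fst (snd (v, z)) \<in> {0..vbar}"
    using AE_F by eventually_elim (use AE_GU in auto)
qed

lemma AE_\<Omega>: "AE \<omega> in \<Omega> T. \<forall>t<T. vals \<omega> t \<in> {0..vbar} \<and> bids \<omega> t \<in> {0..vbar}"
proof -
  have "AE \<omega> in \<Omega> T. vals \<omega> t \<in> {0..vbar} \<and> bids \<omega> t \<in> {0..vbar}" if t: "t < T" for t
    unfolding rounds_def vals_def bids_def
    using AE_PiM_component[of "{..<T}" "\<lambda>_. R" t "\<lambda>y. fst y \<in> {0..vbar} \<and> fst (snd y) \<in> {0..vbar}"]
      R.prob_space_axioms t AE_R by auto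
  then have "AE \<omega> in \<Omega> T. \<forall>t\<in>{..<T}. vals \<omega> t \<in> {0..vbar} \<and> bids \<omega> t \<in> {0..vbar}"
    by (intro eventually_ball_finite) auto
  then show ?thesis by auto
qed

lemma measurable_vals[measurable]: "t < T \<Longrightarrow> (\<lambda>\<omega>. vals \<omega> t) \<in> borel_measurable (\<Omega> T)"
  unfolding rounds_def vals_def by measurable

lemma measurable_bids[measurable]: "t < T \<Longrightarrow> (\<lambda>\<omega>. bids \<omega> t) \<in> borel_measurable (\<Omega> T)"
  unfolding rounds_def bids_def by measurable

lemma integral_R_eq_integral_K:
  fixes k :: "real \<times> real \<Rightarrow> real"
  assumes k: "k \<in> borel_measurable (borel \<Otimes>\<^sub>M borel)"
  shows "(\<integral>y. k (fst y, fst (snd y)) \<partial>R) = integral\<^sup>L K k"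
proof -
  have "distr F F (\<lambda>x. x) \<Otimes>\<^sub>M distr (G \<Otimes>\<^sub>M U) G fst
      = distr (F \<Otimes>\<^sub>M (G \<Otimes>\<^sub>M U)) (F \<Otimes>\<^sub>M G) (\<lambda>(x, y). (x, fst y))"
    by (intro pair_measure_distr) (auto simp: U.distr_pair_fst G.sigma_finite_measure_axioms)
  then have distr: "distr R K (\<lambda>y. (fst y, fst (snd y))) = K"
    by (simp add: U.distr_pair_fst round_measure_def split_beta')
  have "(\<lambda>y. (fst y, fst (snd y))) \<in> measurable R K" by measurable
  moreover have "k \<in> borel_measurable K" using k by (simp add: measurable_cong_sets[OF sets_K refl])
  ultimately show ?thesis
    by (subst distr[symmetric], subst integral_distr) auto
qed

lemma integrable_G_bounded:
  fixes h :: "real \<Rightarrow> real"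
  assumes "h \<in> borel_measurable borel" "\<And>p. p \<in> {0..vbar} \<Longrightarrow> \<bar>h p\<bar> \<le> C"
  shows "integrable G h"
  using AE_G assms by (intro G.integrable_const_bound[where B=C]) (auto elim: AE_mp)

lemma integrable_K_thr_gain:
  assumes \<mu>: "0 \<le> \<mu>"
  shows "integrable K (\<lambda>x. thr_gain \<mu> (fst x) (snd x))"
proof (rule K.integrable_const_bound[where B="vbar + (1 + \<mu>) * vbar"])
  show "AE x in K. norm (thr_gain \<mu> (fst x) (snd x)) \<le> vbar + (1 + \<mu>) * vbar"
    using AE_K
  proof eventually_elim
    case (elim x)
    then show ?case using abs_thr_gain_le[OF \<mu>, of "snd x" vbar "fst x"] by auto
  qed
qed (simp add: thr_gain_def)

lemma integrable_K_pac_gain: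
  assumes \<mu>: "0 \<le> \<mu>"
  shows "integrable K (\<lambda>x. pac_gain \<mu> (fst x) (snd x))"
proof (rule K.integrable_const_bound[where B=vbar])
  show "AE x in K. norm (pac_gain \<mu> (fst x) (snd x)) \<le> vbar"
    using AE_K by eventually_elim (use pac_gain_le[OF \<mu>] pac_gain_nonneg in force)
qed (simp add: pac_gain_def)

lemma rounds_insert: "t < T \<Longrightarrow> \<Omega> T = Pi\<^sub>M (insert t ({..<T} - {t})) (\<lambda>_. R)"
  unfolding rounds_def by (simp add: insert_absorb)

definition thr_value :: "real \<Rightarrow> real \<Rightarrow> real" where
  "thr_value \<mu> v = (\<integral>p. thr_gain \<mu> v p \<partial>G)"

definition thr_dual :: "real \<Rightarrow> real" where
  "thr_dual \<mu> = (\<integral>v. max (thr_value \<mu> v) 0 \<partial>F) + \<mu> * \<rho>"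

definition pac_dual :: "real \<Rightarrow> real" where
  "pac_dual \<mu> = (\<integral>x. pac_gain \<mu> (fst x) (snd x) \<partial>K) + \<mu> * \<rho>"

lemma integrable_thr_value: "0 \<le> \<mu> \<Longrightarrow> integrable F (thr_value \<mu>)"
  using K.integrable_fst'[OF integrable_K_thr_gain] unfolding thr_value_def by simp

lemma thr_dual_nonneg: "0 \<le> \<mu> \<Longrightarrow> 0 \<le> thr_dual \<mu>"
  unfolding thr_dual_def using rho_pos by (intro add_nonneg_nonneg integral_nonneg) auto

lemma integral_GU_thr_gain_le:
  fixes X :: "real \<Rightarrow> bool"
  assumes \<mu>: "0 \<le> \<mu>"
    and meas: "(\<lambda>z. if X (snd z) then thr_gain \<mu> v (fst z) else 0) \<in> borel_measurable (G \<Otimes>\<^sub>M U)"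
  shows "(\<integral>z. (if X (snd z) then thr_gain \<mu> v (fst z) else 0) \<partial>(G \<Otimes>\<^sub>M U)) \<le> max (thr_value \<mu> v) 0"
proof -
  define f where "f p \<gamma> = (if X \<gamma> then thr_gain \<mu> v p else 0)" for p \<gamma>
  have f_int: "integrable (G \<Otimes>\<^sub>M U) (case_prod f)"
  proof (rule GU.integrable_const_bound[where B="\<bar>v\<bar> + (1 + \<mu>) * vbar"])
    show "AE z in G \<Otimes>\<^sub>M U. norm (case_prod f z) \<le> \<bar>v\<bar> + (1 + \<mu>) * vbar"
      using AE_GU
    proof eventually_elim
      case (elim z)
      then show ?case using abs_thr_gain_le[OF \<mu>, of "fst z" vbar v] \<mu> vbar_pos
        by (auto simp: f_def split_beta intro: add_nonneg_nonneg)
    qed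
  qed (use meas in \<open>simp add: f_def split_beta'\<close>)
  have inner: "(\<integral>p. f p \<gamma> \<partial>G) = (if X \<gamma> then thr_value \<mu> v else 0)" for \<gamma>
    by (simp add: f_def thr_value_def)
  have "(\<integral>z. (if X (snd z) then thr_gain \<mu> v (fst z) else 0) \<partial>(G \<Otimes>\<^sub>M U)) = (\<integral>\<gamma>. (\<integral>p. f p \<gamma> \<partial>G) \<partial>U)"
    using GU.integral_snd[OF f_int] by (simp add: f_def split_beta')
  also have "\<dots> \<le> max (thr_value \<mu> v) 0"
    using GU.integrable_snd[OF f_int] unfolding inner by (intro U.integral_le_const) auto
  finally show ?thesis .
qed

lemma round_thr_gain_integral_le:
  fixes X :: "real \<Rightarrow> real \<Rightarrow> bool" and \<mu> :: real
  defines "g \<equiv> \<lambda>y. if X (fst y) (snd (snd y)) then thr_gain \<mu> (fst y) (fst (snd y)) else 0"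
  assumes \<mu>: "0 \<le> \<mu>" and g: "g \<in> borel_measurable R"
  shows "integral\<^sup>L R g \<le> (\<integral>v. max (thr_value \<mu> v) 0 \<partial>F)"
proof -
  have "integrable R g"
  proof (rule R.integrable_const_bound[where B="vbar + (1 + \<mu>) * vbar"])
    show "AE y in R. norm (g y) \<le> vbar + (1 + \<mu>) * vbar"
      using AE_R
    proof eventually_elim
      case (elim y)
      then show ?case using abs_thr_gain_le[OF \<mu>, of "fst (snd y)" vbar "fst y"] vbar_pos
        by (auto simp: g_def)
    qed
  qed (rule g)
  then have g_int: "integrable (F \<Otimes>\<^sub>M (G \<Otimes>\<^sub>M U)) g" unfolding round_measure_def .
  have "integral\<^sup>L R g = (\<integral>v. (\<integral>z. g (v, z) \<partial>(G \<Otimes>\<^sub>M U)) \<partial>F)"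
    unfolding round_measure_def using FGU.integral_fst'[OF g_int] by simp
  also have "\<dots> \<le> (\<integral>v. max (thr_value \<mu> v) 0 \<partial>F)"
  proof (rule integral_mono[OF FGU.integrable_fst'[OF g_int] integrable_max[OF integrable_thr_value[OF \<mu>] integrable_zero]])
    fix v
    have "(\<lambda>z. g (v, z)) \<in> borel_measurable (G \<Otimes>\<^sub>M U)"
      using measurable_Pair2[OF g[unfolded round_measure_def]] space_F by simp
    then show "(\<integral>z. g (v, z) \<partial>(G \<Otimes>\<^sub>M U)) \<le> max (thr_value \<mu> v) 0"
      unfolding g_def using integral_GU_thr_gain_le[OF \<mu>, of "X v" v] by (simp cong: if_cong)
  qed
  finally show ?thesis .
qed

end

section \<open>Expected revenue of throttling\<close>

context auction_setting begin

lemma measurable_mute_rounds: "mute_rounds T n \<in> measurable (\<Omega> T) (\<Omega> T)"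
  unfolding rounds_def
proof (rule measurable_PiM_single')
  fix i assume i: "i \<in> {..<T}"
  have component: "(\<lambda>\<omega>. \<omega> i) \<in> measurable (Pi\<^sub>M {..<T} (\<lambda>_. R)) R"
    using i by (intro measurable_component_singleton) simp
  have "(\<lambda>y. (fst y, fst y + 1, snd (snd y))) \<in> measurable R R"
    by measurable
  from measurable_compose[OF component this]
  have "(\<lambda>\<omega>. (fst (\<omega> i), fst (\<omega> i) + 1, snd (snd (\<omega> i)))) \<in> measurable (Pi\<^sub>M {..<T} (\<lambda>_. R)) R"
    by simp
  then show "(\<lambda>\<omega>. mute_rounds T n \<omega> i) \<in> measurable (Pi\<^sub>M {..<T} (\<lambda>_. R)) R"
    using i component by (cases "i < n") (simp_all add: mute_rounds_def)
qed (auto simp: mute_rounds_def space_PiM PiE_iff extensional_def sets_eq_imp_space_eq[OF sets_R]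
    space_pair_measure)

lemma measurable_thr_revenue_prefix:
  assumes "(\<lambda>\<omega>. thr_revenue full \<beta> (vals \<omega>) (bids \<omega>) (gams \<omega>) T) \<in> borel_measurable (\<Omega> T)" and "n \<le> T"
  shows "(\<lambda>\<omega>. thr_revenue full \<beta> (vals \<omega>) (bids \<omega>) (gams \<omega>) n) \<in> borel_measurable (\<Omega> T)"
  using measurable_comp[OF measurable_mute_rounds[of T n] assms(1)] thr_revenue_mute_rounds[OF assms(2)]
  by (simp add: comp_def)

lemma measurable_thr_round_gain:
  assumes revenue: "(\<lambda>\<omega>. thr_revenue full \<beta> (vals \<omega>) (bids \<omega>) (gams \<omega>) T) \<in> borel_measurable (\<Omega> T)"
    and t: "t < T"
  shows "(\<lambda>\<omega>. if thr_x full \<beta> (vals \<omega>) (bids \<omega>) (gams \<omega>) t then thr_gain \<mu> (vals \<omega> t) (bids \<omega> t) else 0)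
    \<in> borel_measurable (\<Omega> T)"
proof -
  have [measurable]: "(\<lambda>\<omega>. thr_revenue full \<beta> (vals \<omega>) (bids \<omega>) (gams \<omega>) t) \<in> borel_measurable (\<Omega> T)"
    "(\<lambda>\<omega>. thr_revenue full \<beta> (vals \<omega>) (bids \<omega>) (gams \<omega>) (Suc t)) \<in> borel_measurable (\<Omega> T)"
    using measurable_thr_revenue_prefix[OF revenue] t by auto
  have "(\<lambda>\<omega>. if thr_x full \<beta> (vals \<omega>) (bids \<omega>) (gams \<omega>) t then thr_gain \<mu> (vals \<omega> t) (bids \<omega> t) else 0)
    = (\<lambda>\<omega>. if 0 < thr_revenue full \<beta> (vals \<omega>) (bids \<omega>) (gams \<omega>) (Suc t) - thr_revenue full \<beta> (vals \<omega>) (bids \<omega>) (gams \<omega>) t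
           then vals \<omega> t - (1 + \<mu>) * bids \<omega> t else 0)"
    by (auto simp: fun_eq_iff thr_revenue_def thr_gain_def max_def)
  then show ?thesis using t by simp
qed

lemma integrable_thr_round_gain:
  assumes \<mu>: "0 \<le> \<mu>" and t: "t < T"
    and meas: "(\<lambda>\<omega>. if P \<omega> then thr_gain \<mu> (vals \<omega> t) (bids \<omega> t) else 0) \<in> borel_measurable (\<Omega> T)"
  shows "integrable (\<Omega> T) (\<lambda>\<omega>. if P \<omega> then thr_gain \<mu> (vals \<omega> t) (bids \<omega> t) else 0)"
proof (rule \<Omega>.integrable_const_bound[where B="vbar + (1 + \<mu>) * vbar"])
  show "AE \<omega> in \<Omega> T. norm (if P \<omega> then thr_gain \<mu> (vals \<omega> t) (bids \<omega> t) else 0) \<le> vbar + (1 + \<mu>) * vbar"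
    using AE_\<Omega>[of T]
  proof eventually_elim
    case (elim \<omega>)
    then show ?case using abs_thr_gain_le[OF \<mu>, of "bids \<omega> t" vbar "vals \<omega> t"] t vbar_pos \<mu> by auto
  qed
qed (rule meas)

text \<open>The decision in round \<open>t\<close> is a function of the earlier rounds, the value and the internal
  randomness only, so integrating out round \<open>t\<close> leaves at most the positive part of the expected gain.\<close>

lemma expected_thr_round_gain_le:
  fixes \<beta> :: strategy and \<mu> :: real and full :: bool and t :: nat
  defines "f \<equiv> \<lambda>\<omega>. if thr_x full \<beta> (vals \<omega>) (bids \<omega>) (gams \<omega>) t then thr_gain \<mu> (vals \<omega> t) (bids \<omega> t) else 0"
  assumes \<mu>: "0 \<le> \<mu>" and t: "t < T" and f: "f \<in> borel_measurable (\<Omega> T)"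
  shows "integral\<^sup>L (\<Omega> T) f \<le> (\<integral>v. max (thr_value \<mu> v) 0 \<partial>F)"
proof -
  define I where "I = {..<T} - {t}"
  have \<Omega>: "\<Omega> T = Pi\<^sub>M (insert t I) (\<lambda>_. R)" unfolding I_def by (rule rounds_insert[OF t])
  have tI: "finite I" "t \<notin> I" by (auto simp: I_def)
  have f_int: "integrable (Pi\<^sub>M (insert t I) (\<lambda>_. R)) f"
    using integrable_thr_round_gain[OF \<mu> t f[unfolded f_def]] unfolding f_def \<Omega> .
  show ?thesis
    unfolding \<Omega>
  proof (rule product_integral_insert_le[OF R.prob_space_axioms tI f_int])
    fix x assume x: "x \<in> space (Pi\<^sub>M I (\<lambda>_. R))"
    define X where "X = \<beta> t (thr_hist full \<beta> (vals x) (bids x) (gams x) t)"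
    have eq: "f (x(t := y)) = (if X (fst y) (snd (snd y)) then thr_gain \<mu> (fst y) (fst (snd y)) else 0)" for y
    proof -
      have "thr_hist full \<beta> (vals (x(t := y))) (bids (x(t := y))) (gams (x(t := y))) t
          = thr_hist full \<beta> (vals x) (bids x) (gams x) t"
        by (rule thr_hist_local) (auto simp: vals_def bids_def gams_def)
      then show ?thesis by (simp add: f_def thr_x_def X_def vals_def bids_def gams_def)
    qed
    have "(\<lambda>y. f (x(t := y))) \<in> borel_measurable R"
      using measurable_comp[OF measurable_component_update[OF x tI(2)] f[unfolded \<Omega>]]
      by (simp add: comp_def)
    then show "(\<integral>y. f (x(t := y)) \<partial>R) \<le> (\<integral>v. max (thr_value \<mu> v) 0 \<partial>F)"
      unfolding eq using round_thr_gain_integral_le[OF \<mu>] by simp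
  qed
qed

lemma expected_thr_revenue_le:
  assumes \<mu>: "0 \<le> \<mu>" and feasible: "thr_feasible full \<beta> (\<rho> * real T) T"
  shows "(\<integral>\<omega>. thr_revenue full \<beta> (vals \<omega>) (bids \<omega>) (gams \<omega>) T \<partial>\<Omega> T) \<le> real T * thr_dual \<mu>"
proof (cases "integrable (\<Omega> T) (\<lambda>\<omega>. thr_revenue full \<beta> (vals \<omega>) (bids \<omega>) (gams \<omega>) T)")
  case False
  then show ?thesis using thr_dual_nonneg[OF \<mu>] by (simp add: not_integrable_integral_eq)
next
  case True
  define f where "f t \<omega> = (if thr_x full \<beta> (vals \<omega>) (bids \<omega>) (gams \<omega>) t then thr_gain \<mu> (vals \<omega> t) (bids \<omega> t) else 0)"
    for t \<omega>
  have f_meas: "f t \<in> borel_measurable (\<Omega> T)" if "t < T" for t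
    unfolding f_def by (rule measurable_thr_round_gain[OF borel_measurable_integrable[OF True] that])
  have f_int: "integrable (\<Omega> T) (f t)" if "t < T" for t
    using integrable_thr_round_gain[OF \<mu> that f_meas[OF that, unfolded f_def]] unfolding f_def .
  have "(\<integral>\<omega>. thr_revenue full \<beta> (vals \<omega>) (bids \<omega>) (gams \<omega>) T \<partial>\<Omega> T) \<le> (\<integral>\<omega>. \<mu> * (\<rho> * real T) + (\<Sum>t<T. f t \<omega>) \<partial>\<Omega> T)"
  proof (rule integral_mono_AE[OF True])
    show "integrable (\<Omega> T) (\<lambda>\<omega>. \<mu> * (\<rho> * real T) + (\<Sum>t<T. f t \<omega>))"
      using f_int by (intro Bochner_Integration.integrable_add Bochner_Integration.integrable_sum) auto
    show "AE \<omega> in \<Omega> T. thr_revenue full \<beta> (vals \<omega>) (bids \<omega>) (gams \<omega>) T \<le> \<mu> * (\<rho> * real T) + (\<Sum>t<T. f t \<omega>)"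
      using AE_\<Omega>[of T] unfolding f_def
      by eventually_elim (use feasible \<mu> in \<open>auto intro: thr_revenue_le_lagrangian simp: thr_feasible_def\<close>)
  qed
  also have "\<dots> = \<mu> * (\<rho> * real T) + (\<Sum>t<T. (\<integral>\<omega>. f t \<omega> \<partial>\<Omega> T))"
    using f_int by (subst Bochner_Integration.integral_add) (auto simp: \<Omega>.prob_space)
  also have "\<dots> \<le> \<mu> * (\<rho> * real T) + (\<Sum>t<T. (\<integral>v. max (thr_value \<mu> v) 0 \<partial>F))"
    using expected_thr_round_gain_le[OF \<mu>] f_meas unfolding f_def
    by (intro add_left_mono sum_mono) auto
  also have "\<dots> = real T * thr_dual \<mu>"
    by (simp add: thr_dual_def algebra_simps)
  finally show ?thesis .
qed

lemma thr_opt_bounds: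
  assumes \<mu>: "0 \<le> \<mu>"
  shows "0 \<le> thr_opt full F G \<rho> T" "thr_opt full F G \<rho> T \<le> real T * thr_dual \<mu>"
proof -
  let ?values = "(\<lambda>\<beta>. \<integral>\<omega>. thr_revenue full \<beta> (vals \<omega>) (bids \<omega>) (gams \<omega>) T \<partial>\<Omega> T)
    ` {\<beta>. thr_feasible full \<beta> (\<rho> * real T) T}"
  have "0 \<in> ?values"
    using rho_pos
    by (intro image_eqI[where x="\<lambda>_ _ _ _. False"])
      (auto simp: thr_feasible_def thr_payment_def thr_revenue_def thr_x_def)
  moreover have "\<And>r. r \<in> ?values \<Longrightarrow> r \<le> real T * thr_dual \<mu>"
    using expected_thr_revenue_le[OF \<mu>] by blast
  ultimately show "0 \<le> thr_opt full F G \<rho> T" "thr_opt full F G \<rho> T \<le> real T * thr_dual \<mu>"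
    unfolding thr_opt_def by (auto intro!: cSup_upper cSup_least bdd_aboveI)
qed

end

section \<open>Expected revenue of pacing\<close>

context auction_setting begin

lemma round_pac_dual_integral:
  assumes u: "0 \<le> u"
  shows "(\<integral>y. pac_gain u (fst y) (fst (snd y)) + u * \<rho> \<partial>R) = pac_dual u"
proof -
  have "(\<lambda>x. pac_gain u (fst x) (snd x) + u * \<rho>) \<in> borel_measurable (borel \<Otimes>\<^sub>M borel)"
    unfolding pac_gain_def by measurable
  from integral_R_eq_integral_K[OF this]
  have "(\<integral>y. pac_gain u (fst y) (fst (snd y)) + u * \<rho> \<partial>R) = (\<integral>x. pac_gain u (fst x) (snd x) + u * \<rho> \<partial>K)"
    by simp
  also have "\<dots> = pac_dual u"
    using integrable_K_pac_gain[OF u] by (simp add: pac_dual_def K.prob_space)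
  finally show ?thesis .
qed

context
  fixes \<epsilon> \<mu>bar \<mu>1 B :: real and T :: nat
begin

abbreviation "pac_mu_\<Omega> t \<omega> \<equiv> pac_mu \<epsilon> \<rho> \<mu>bar \<mu>1 B (vals \<omega>) (bids \<omega>) t"

lemma measurable_pac_state:
  "t \<le> T \<Longrightarrow> pac_mu_\<Omega> t \<in> borel_measurable (\<Omega> T)
    \<and> (\<lambda>\<omega>. pac_budget \<epsilon> \<rho> \<mu>bar \<mu>1 B (vals \<omega>) (bids \<omega>) t) \<in> borel_measurable (\<Omega> T)"
proof (induction t)
  case 0 then show ?case by (simp add: pac_mu_0 pac_budget_eq)
next
  case (Suc t)
  then have [measurable]: "t < T" "pac_mu_\<Omega> t \<in> borel_measurable (\<Omega> T)"
    "(\<lambda>\<omega>. pac_budget \<epsilon> \<rho> \<mu>bar \<mu>1 B (vals \<omega>) (bids \<omega>) t) \<in> borel_measurable (\<Omega> T)"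
    by auto
  have [measurable]: "(\<lambda>\<omega>. pac_spend \<epsilon> \<rho> \<mu>bar \<mu>1 B (vals \<omega>) (bids \<omega>) t) \<in> borel_measurable (\<Omega> T)"
    unfolding pac_spend_def pac_bid_def by measurable
  show ?case unfolding pac_mu_Suc pac_budget_Suc by measurable
qed

lemma integrable_pac_revenue:
  "integrable (\<Omega> T) (\<lambda>\<omega>. pac_revenue \<epsilon> \<rho> \<mu>bar \<mu>1 B (vals \<omega>) (bids \<omega>) T)"
proof (rule \<Omega>.integrable_const_bound[where B="real T * vbar"])
  have "(\<lambda>\<omega>. if pac_bid \<epsilon> \<rho> \<mu>bar \<mu>1 B (vals \<omega>) (bids \<omega>) t \<ge> bids \<omega> t then vals \<omega> t - bids \<omega> t else 0)
      \<in> borel_measurable (\<Omega> T)" if t: "t < T" for t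
  proof -
    have [measurable]: "pac_mu_\<Omega> t \<in> borel_measurable (\<Omega> T)"
      "(\<lambda>\<omega>. pac_budget \<epsilon> \<rho> \<mu>bar \<mu>1 B (vals \<omega>) (bids \<omega>) t) \<in> borel_measurable (\<Omega> T)"
      using measurable_pac_state[of t] t by auto
    show ?thesis using t unfolding pac_bid_def by measurable
  qed
  then show "(\<lambda>\<omega>. pac_revenue \<epsilon> \<rho> \<mu>bar \<mu>1 B (vals \<omega>) (bids \<omega>) T) \<in> borel_measurable (\<Omega> T)"
    unfolding pac_revenue_eq by (intro borel_measurable_sum) auto
  show "AE \<omega> in \<Omega> T. norm (pac_revenue \<epsilon> \<rho> \<mu>bar \<mu>1 B (vals \<omega>) (bids \<omega>) T) \<le> real T * vbar"
    using AE_\<Omega>[of T]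
  proof eventually_elim
    case (elim \<omega>)
    have "\<bar>pac_revenue \<epsilon> \<rho> \<mu>bar \<mu>1 B (vals \<omega>) (bids \<omega>) T\<bar>
      \<le> (\<Sum>t<T. \<bar>if pac_bid \<epsilon> \<rho> \<mu>bar \<mu>1 B (vals \<omega>) (bids \<omega>) t \<ge> bids \<omega> t then vals \<omega> t - bids \<omega> t else 0\<bar>)"
      unfolding pac_revenue_eq by (rule sum_abs)
    also have "\<dots> \<le> (\<Sum>t<T. vbar)"
      using elim vbar_pos by (intro sum_mono) auto
    finally show ?case by simp
  qed
qed

lemma integrable_pac_round_dual:
  assumes t: "t < T" and mu1: "0 \<le> \<mu>1" "\<mu>1 \<le> \<mu>bar"
  shows "integrable (\<Omega> T) (\<lambda>\<omega>. pac_gain (pac_mu_\<Omega> t \<omega>) (vals \<omega> t) (bids \<omega> t) + pac_mu_\<Omega> t \<omega> * \<rho>)"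
proof (rule \<Omega>.integrable_const_bound[where B="vbar + \<mu>bar * \<rho>"])
  have [measurable]: "pac_mu_\<Omega> t \<in> borel_measurable (\<Omega> T)"
    using measurable_pac_state[of t] t by auto
  show "(\<lambda>\<omega>. pac_gain (pac_mu_\<Omega> t \<omega>) (vals \<omega> t) (bids \<omega> t) + pac_mu_\<Omega> t \<omega> * \<rho>) \<in> borel_measurable (\<Omega> T)"
    using t unfolding pac_gain_def by measurable
  show "AE \<omega> in \<Omega> T. norm (pac_gain (pac_mu_\<Omega> t \<omega>) (vals \<omega> t) (bids \<omega> t) + pac_mu_\<Omega> t \<omega> * \<rho>) \<le> vbar + \<mu>bar * \<rho>"
    using AE_\<Omega>[of T]
  proof eventually_elim
    case (elim \<omega>)
    have u: "0 \<le> pac_mu_\<Omega> t \<omega>" "pac_mu_\<Omega> t \<omega> \<le> \<mu>bar" using pac_mu_range[OF mu1] by auto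
    then have "pac_mu_\<Omega> t \<omega> * \<rho> \<le> \<mu>bar * \<rho>" using rho_pos by (intro mult_right_mono) auto
    moreover have "pac_gain (pac_mu_\<Omega> t \<omega>) (vals \<omega> t) (bids \<omega> t) \<le> vbar"
      using pac_gain_le[OF u(1)] elim t by (meson atLeastAtMost_iff order_trans)
    moreover have "0 \<le> pac_gain (pac_mu_\<Omega> t \<omega>) (vals \<omega> t) (bids \<omega> t) + pac_mu_\<Omega> t \<omega> * \<rho>"
      using u rho_pos pac_gain_nonneg by simp
    ultimately show ?case by simp
  qed
qed

lemma expected_pac_round_dual_ge:
  assumes t: "t < T" and mu1: "0 \<le> \<mu>1" "\<mu>1 \<le> \<mu>bar"
    and m: "\<And>\<mu>. 0 \<le> \<mu> \<Longrightarrow> \<mu> \<le> \<mu>bar \<Longrightarrow> m \<le> pac_dual \<mu>"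
  shows "m \<le> (\<integral>\<omega>. pac_gain (pac_mu_\<Omega> t \<omega>) (vals \<omega> t) (bids \<omega> t) + pac_mu_\<Omega> t \<omega> * \<rho> \<partial>\<Omega> T)"
proof -
  define I where "I = {..<T} - {t}"
  have \<Omega>: "\<Omega> T = Pi\<^sub>M (insert t I) (\<lambda>_. R)" unfolding I_def by (rule rounds_insert[OF t])
  have tI: "finite I" "t \<notin> I" by (auto simp: I_def)
  show ?thesis
    unfolding \<Omega>
  proof (rule product_integral_insert_ge[OF R.prob_space_axioms tI integrable_pac_round_dual[OF t mu1, unfolded \<Omega>]])
    fix x assume "x \<in> space (Pi\<^sub>M I (\<lambda>_. R))"
    define u where "u = pac_mu_\<Omega> t x"
    have u: "0 \<le> u" "u \<le> \<mu>bar" using pac_mu_range[OF mu1] by (auto simp: u_def)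
    have "pac_mu_\<Omega> t (x(t := y)) = u" for y
    proof -
      have "pac_state \<epsilon> \<rho> \<mu>bar \<mu>1 B (vals (x(t := y))) (bids (x(t := y))) t = pac_state \<epsilon> \<rho> \<mu>bar \<mu>1 B (vals x) (bids x) t"
        by (rule pac_state_local) (auto simp: vals_def bids_def)
      then show ?thesis by (simp add: u_def pac_mu_def)
    qed
    then show "m \<le> (\<integral>y. pac_gain (pac_mu_\<Omega> t (x(t := y))) (vals (x(t := y)) t) (bids (x(t := y)) t)
        + pac_mu_\<Omega> t (x(t := y)) * \<rho> \<partial>R)"
      using round_pac_dual_integral[OF u(1)] m[OF u] by (simp add: vals_def bids_def)
  qed
qed

lemma expected_pac_revenue_ge:
  assumes eps: "\<epsilon> > 0" "\<epsilon> * vbar \<le> 1" and mubar: "\<mu>bar \<ge> vbar / \<rho>" and mu1: "0 \<le> \<mu>1" "\<mu>1 \<le> \<mu>bar"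
    and N: "N \<le> T" "\<rho> * real N + \<mu>bar / \<epsilon> + vbar \<le> B"
    and m: "\<And>\<mu>. 0 \<le> \<mu> \<Longrightarrow> \<mu> \<le> \<mu>bar \<Longrightarrow> m \<le> pac_dual \<mu>"
  shows "real N * m - \<mu>bar\<^sup>2 / (2 * \<epsilon>) - real N * \<epsilon> * vbar\<^sup>2 / 2
     \<le> (\<integral>\<omega>. pac_revenue \<epsilon> \<rho> \<mu>bar \<mu>1 B (vals \<omega>) (bids \<omega>) T \<partial>\<Omega> T)"
proof -
  define Y where "Y t \<omega> = pac_gain (pac_mu_\<Omega> t \<omega>) (vals \<omega> t) (bids \<omega> t) + pac_mu_\<Omega> t \<omega> * \<rho>" for t \<omega>
  define C where "C = \<mu>bar\<^sup>2 / (2 * \<epsilon>) + real N * \<epsilon> * vbar\<^sup>2 / 2"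
  have Y_int: "integrable (\<Omega> T) (Y t)" and Y_ge: "m \<le> integral\<^sup>L (\<Omega> T) (Y t)" if "t < N" for t
    using integrable_pac_round_dual[OF _ mu1] expected_pac_round_dual_ge[OF _ mu1 m] that N(1)
    unfolding Y_def by auto
  have "real N * m - C \<le> (\<Sum>t<N. integral\<^sup>L (\<Omega> T) (Y t)) - C"
    using sum_mono[of "{..<N}" "\<lambda>_. m", OF Y_ge] by simp
  also have "\<dots> = (\<integral>\<omega>. (\<Sum>t<N. Y t \<omega>) \<partial>\<Omega> T) - C"
    using Y_int by (subst Bochner_Integration.integral_sum) auto
  also have "\<dots> = (\<integral>\<omega>. (\<Sum>t<N. Y t \<omega>) - C \<partial>\<Omega> T)"
    using Y_int by (subst Bochner_Integration.integral_diff) (auto simp: \<Omega>.prob_space)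
  also have "\<dots> \<le> (\<integral>\<omega>. pac_revenue \<epsilon> \<rho> \<mu>bar \<mu>1 B (vals \<omega>) (bids \<omega>) T \<partial>\<Omega> T)"
  proof (rule integral_mono_AE[OF _ integrable_pac_revenue])
    show "integrable (\<Omega> T) (\<lambda>\<omega>. (\<Sum>t<N. Y t \<omega>) - C)"
      using Y_int by (intro Bochner_Integration.integrable_diff Bochner_Integration.integrable_sum) auto
    show "AE \<omega> in \<Omega> T. (\<Sum>t<N. Y t \<omega>) - C \<le> pac_revenue \<epsilon> \<rho> \<mu>bar \<mu>1 B (vals \<omega>) (bids \<omega>) T"
      using AE_\<Omega>[of T]
    proof eventually_elim
      case (elim \<omega>)
      have "(\<Sum>t<N. Y t \<omega>) - \<mu>bar\<^sup>2 / (2 * \<epsilon>) - real N * \<epsilon> * vbar\<^sup>2 / 2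
        \<le> pac_revenue \<epsilon> \<rho> \<mu>bar \<mu>1 B (vals \<omega>) (bids \<omega>) T"
        unfolding Y_def
        by (rule pac_revenue_ge[where v="vals \<omega>" and p="bids \<omega>" and vbar=vbar and T=T])
          (use elim eps rho_pos rho_le mubar mu1 N in auto)
      then show ?case by (simp add: C_def)
    qed
  qed
  finally show ?thesis by (simp add: C_def)
qed

end

lemma pac_exp_le: "pac_exp eps \<rho> \<mu>bar \<mu>1 F G T \<le> vbar * real T"
  unfolding pac_exp_def
proof (rule \<Omega>.integral_le_const[OF integrable_pac_revenue])
  show "AE \<omega> in \<Omega> T. pac_revenue (eps T) \<rho> \<mu>bar \<mu>1 (\<rho> * real T) (vals \<omega>) (bids \<omega>) T \<le> vbar * real T"
    using AE_\<Omega>[of T]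
  proof eventually_elim
    case (elim \<omega>)
    have "pac_revenue (eps T) \<rho> \<mu>bar \<mu>1 (\<rho> * real T) (vals \<omega>) (bids \<omega>) T \<le> (\<Sum>t<T. vbar)"
      unfolding pac_revenue_eq using elim by (intro sum_mono) auto
    then show ?case by (simp add: mult.commute)
  qed
qed

lemma pac_exp_ge_slack:
  assumes eps: "0 < eps T" "eps T * vbar \<le> 1" and budget: "vbar + \<mu>bar / eps T \<le> \<rho> * real T"
    and mubar: "vbar / \<rho> \<le> \<mu>bar" and mu1: "0 \<le> \<mu>1" "\<mu>1 \<le> \<mu>bar"
    and m: "0 \<le> m" "\<And>\<mu>. 0 \<le> \<mu> \<Longrightarrow> \<mu> \<le> \<mu>bar \<Longrightarrow> m \<le> pac_dual \<mu>"
  shows "(real T - (vbar + \<mu>bar / eps T) / \<rho> - 1) * m - \<mu>bar\<^sup>2 / (2 * eps T) - real T * eps T * vbar\<^sup>2 / 2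
    \<le> pac_exp eps \<rho> \<mu>bar \<mu>1 F G T"
proof -
  define slack where "slack = real T - (vbar + \<mu>bar / eps T) / \<rho>"
  define N where "N = nat \<lfloor>slack\<rfloor>"
  have "0 \<le> slack" using budget rho_pos by (simp add: slack_def field_simps)
  then have N: "slack - 1 \<le> N" "N \<le> slack" unfolding N_def by linarith+
  have "0 \<le> vbar / \<rho>" using vbar_pos rho_pos by simp
  then have "0 \<le> \<mu>bar / eps T" using mubar eps by simp
  then have "0 \<le> (vbar + \<mu>bar / eps T) / \<rho>" using rho_pos vbar_pos by simp
  then have N_le: "N \<le> T" using N(2) unfolding slack_def by linarith
  have "\<rho> * real N \<le> \<rho> * slack" using N(2) rho_pos by (intro mult_left_mono) auto
  then have "\<rho> * real N + \<mu>bar / eps T + vbar \<le> \<rho> * real T"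
    using rho_pos by (simp add: slack_def right_diff_distrib)
  from expected_pac_revenue_ge[OF eps mubar mu1 N_le this m(2)]
  have "real N * m - \<mu>bar\<^sup>2 / (2 * eps T) - real N * eps T * vbar\<^sup>2 / 2 \<le> pac_exp eps \<rho> \<mu>bar \<mu>1 F G T"
    unfolding pac_exp_def .
  moreover have "(slack - 1) * m \<le> real N * m" using N m(1) by (intro mult_right_mono) auto
  moreover have "real N * eps T * vbar\<^sup>2 / 2 \<le> real T * eps T * vbar\<^sup>2 / 2"
    using N_le eps by (intro divide_right_mono mult_right_mono) auto
  ultimately show ?thesis unfolding slack_def by linarith
qed

lemma pac_exp_ge_sqrt:
  assumes a: "0 < a1" "0 < a2"
    and eps_order: "\<forall>T\<ge>1. a1 / sqrt (real T) \<le> eps T \<and> eps T \<le> a2 / sqrt (real T)"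
    and mubar: "vbar / \<rho> \<le> \<mu>bar" and mu1: "0 \<le> \<mu>1" "\<mu>1 \<le> \<mu>bar"
    and m: "0 \<le> m" "\<And>\<mu>. 0 \<le> \<mu> \<Longrightarrow> \<mu> \<le> \<mu>bar \<Longrightarrow> m \<le> pac_dual \<mu>"
  shows "\<exists>C T1. \<forall>T\<ge>T1. real T * m - C * sqrt (real T) \<le> pac_exp eps \<rho> \<mu>bar \<mu>1 F G T"
proof -
  have "0 \<le> vbar / \<rho>" using vbar_pos rho_pos by simp
  then have \<mu>bar: "0 \<le> \<mu>bar" using mubar by linarith
  define C where "C = (vbar / \<rho> + 1) * m + \<mu>bar * m / (\<rho> * a1) + \<mu>bar\<^sup>2 / (2 * a1) + a2 * vbar\<^sup>2 / 2"
  define X where "X = (a2 * vbar)\<^sup>2 + (2 * \<mu>bar / (\<rho> * a1))\<^sup>2 + 2 * vbar / \<rho> + 1"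
  have "real T * m - C * sqrt (real T) \<le> pac_exp eps \<rho> \<mu>bar \<mu>1 F G T" if T: "nat \<lceil>X\<rceil> \<le> T" for T
  proof -
    define s where "s = sqrt (real T)"
    have "0 \<le> 2 * vbar / \<rho>" using vbar_pos rho_pos by simp
    moreover have "X \<le> real T" using T by linarith
    ultimately have T_large: "1 \<le> real T" "(a2 * vbar)\<^sup>2 \<le> real T" "(2 * \<mu>bar / (\<rho> * a1))\<^sup>2 \<le> real T"
      "2 * vbar / \<rho> \<le> real T"
      unfolding X_def by (smt (verit) zero_le_power2)+
    then have s: "1 \<le> s" "a2 * vbar \<le> s" "2 * \<mu>bar / (\<rho> * a1) \<le> s" and s2: "s\<^sup>2 = real T"
      unfolding s_def by (auto intro: real_le_rsqrt)
    have eps: "a1 / s \<le> eps T" "eps T \<le> a2 / s"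
      using eps_order T_large(1) unfolding s_def by auto
    have "0 \<le> vbar" using vbar_pos by simp
    note step = step_size_bounds[OF a(1) rho_pos this \<mu>bar s eps T_large(4)[folded s2], unfolded s2]
    from pac_exp_ge_slack[where eps=eps and T=T, OF step mubar mu1 m]
    have "(s\<^sup>2 - (vbar + \<mu>bar / eps T) / \<rho> - 1) * m - \<mu>bar\<^sup>2 / (2 * eps T) - s\<^sup>2 * eps T * vbar\<^sup>2 / 2
      \<le> pac_exp eps \<rho> \<mu>bar \<mu>1 F G T"
      unfolding s2 .
    moreover have "s\<^sup>2 * m - C * s \<le> (s\<^sup>2 - (vbar + \<mu>bar / eps T) / \<rho> - 1) * m - \<mu>bar\<^sup>2 / (2 * eps T) - s\<^sup>2 * eps T * vbar\<^sup>2 / 2"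
      unfolding C_def using vbar_pos by (intro pacing_loss_le_sqrt[OF s(1) eps a(1) rho_pos _ \<mu>bar m(1)]) auto
    ultimately have "s\<^sup>2 * m - C * s \<le> pac_exp eps \<rho> \<mu>bar \<mu>1 F G T" by linarith
    then show ?thesis by (simp add: s_def)
  qed
  then show ?thesis by blast
qed

end

section \<open>The gap between the two duals\<close>

locale dense_auction_setting = auction_setting +
  fixes L :: real and g :: "real \<Rightarrow> real"
  assumes L_pos: "L > 0" and g_meas: "g \<in> borel_measurable lborel" and g_nonneg: "\<And>x. 0 \<le> g x"
    and G_density: "G = density lborel (\<lambda>x. ennreal (g x))"
    and g_ge_L: "\<And>x. x \<in> {0..vbar} \<Longrightarrow> L \<le> g x"
    and spend: "(\<integral>vp. (if fst vp \<ge> snd vp then snd vp else 0) \<partial>(F \<Otimes>\<^sub>M G)) > \<rho>"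
begin

lemma emeasure_G_interval_pos:
  assumes "0 \<le> a" "a < b" "b \<le> vbar"
  shows "emeasure G {a<..<b} \<noteq> 0"
proof -
  have "ennreal L * ennreal (b - a) = (\<integral>\<^sup>+x. ennreal L * indicator {a<..<b} x \<partial>lborel)"
    using assms by (simp add: nn_integral_cmult_indicator)
  also have "\<dots> \<le> (\<integral>\<^sup>+x. ennreal (g x) * indicator {a<..<b} x \<partial>lborel)"
    using assms g_ge_L by (intro nn_integral_mono) (auto simp: indicator_def intro: ennreal_leI)
  also have "\<dots> = emeasure G {a<..<b}"
    unfolding G_density using g_meas by (intro emeasure_density[symmetric]) auto
  finally show ?thesis
    using L_pos assms by (auto simp: ennreal_mult[symmetric] simp del: ennreal_0)
qed

lemma integral_G_pos:
  fixes f :: "real \<Rightarrow> real"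
  assumes f: "integrable G f" "\<And>p. 0 \<le> f p" and ab: "0 \<le> a" "a < b" "b \<le> vbar"
    and pos: "\<And>p. p \<in> {a<..<b} \<Longrightarrow> 0 < f p"
  shows "0 < integral\<^sup>L G f"
proof -
  have "integral\<^sup>L G (\<lambda>_. 0) < integral\<^sup>L G f"
  proof (rule G.integral_less_AE[where A="{a<..<b}"])
    show "AE p in G. p \<in> {a<..<b} \<longrightarrow> 0 \<noteq> f p"
      using pos by (intro AE_I2) (metis less_irrefl)
  qed (use f emeasure_G_interval_pos[OF ab] in \<open>auto simp: G_sets\<close>)
  then show ?thesis by simp
qed

lemma AE_G_ne: "AE p in G. p \<noteq> v"
  unfolding G_density using AE_lborel_singleton[of v] g_meas
  by (subst AE_density) (auto elim: AE_mp)

lemma emeasure_F_pos: "emeasure F {0<..vbar} \<noteq> 0"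
proof
  assume "emeasure F {0<..vbar} = 0"
  then have "AE v in F. v \<notin> {0<..vbar}" by (intro AE_not_in) (simp add: F_sets null_sets_def)
  then have "AE v in F. v = 0" using AE_F by eventually_elim auto
  then have "AE x in K. (if fst x \<ge> snd x then snd x else 0) = (0::real)"
  proof (intro K.AE_pair_measure)
    show "AE v in F. AE p in G. (if fst (v, p) \<ge> snd (v, p) then snd (v, p) else 0) = (0::real)"
      if "AE v in F. v = 0"
      using that by eventually_elim (use AE_G in \<open>auto elim: AE_mp\<close>)
  qed measurable
  then have "(\<integral>x. (if fst x \<ge> snd x then snd x else 0) \<partial>K) = (\<integral>x. 0 \<partial>K)"
    by (intro integral_cong_AE) auto
  then show False using spend rho_pos by simp
qed

lemma spend_strict: "\<rho> < (\<integral>x. (if snd x < fst x then snd x else 0) \<partial>K)"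
proof -
  have "AE x in K. snd x \<noteq> fst x"
    by (rule K.AE_pair_measure) (auto intro: AE_G_ne AE_I2, measurable)
  then have "AE x in K. (if snd x < fst x then snd x else 0) = (if fst x \<ge> snd x then snd x else 0)"
    by eventually_elim auto
  then have "(\<integral>x. (if snd x < fst x then snd x else 0) \<partial>K) = (\<integral>x. (if fst x \<ge> snd x then snd x else 0) \<partial>K)"
    by (intro integral_cong_AE) auto
  then show ?thesis using spend by simp
qed

lemma integrable_G_thr_gain: "0 \<le> \<mu> \<Longrightarrow> integrable G (thr_gain \<mu> v)"
  using abs_thr_gain_le[of \<mu> _ vbar v]
  by (intro integrable_G_bounded[where C="\<bar>v\<bar> + (1 + \<mu>) * vbar"]) (auto simp: thr_gain_def[abs_def])

lemma integrable_G_pac_gain: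
  assumes \<mu>: "0 \<le> \<mu>"
  shows "integrable G (pac_gain \<mu> v)"
proof (rule integrable_G_bounded[where C="\<bar>v\<bar>"])
  fix p :: real assume "p \<in> {0..vbar}"
  then have "0 \<le> (1 + \<mu>) * p" using \<mu> by simp
  then show "\<bar>pac_gain \<mu> v p\<bar> \<le> \<bar>v\<bar>" by (simp add: pac_gain_def)
qed (simp add: pac_gain_def[abs_def])

lemma pac_dual_eq: "0 \<le> \<mu> \<Longrightarrow> pac_dual \<mu> = (\<integral>v. (\<integral>p. pac_gain \<mu> v p \<partial>G) \<partial>F) + \<mu> * \<rho>"
  using K.integral_fst'[OF integrable_K_pac_gain] by (simp add: pac_dual_def)

lemma pos_part_thr_value_le:
  assumes \<mu>: "0 \<le> \<mu>"
  shows "max (thr_value \<mu> v) 0 \<le> (\<integral>p. pac_gain \<mu> v p \<partial>G)"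
proof -
  have "thr_value \<mu> v \<le> (\<integral>p. pac_gain \<mu> v p \<partial>G)"
    unfolding thr_value_def using \<mu>
    by (intro integral_mono integrable_G_thr_gain integrable_G_pac_gain) (auto simp: thr_gain_def pac_gain_def)
  then show ?thesis by (simp add: pac_gain_nonneg)
qed

text \<open>Strictness comes from competing bids in \<open>(v / (1 + \<mu>), v)\<close>, which the throttling gain
  counts with a negative sign and the pacing gain drops, and from bids in \<open>(0, v / (1 + \<mu>))\<close>,
  which make the pacing gain positive.\<close>

lemma pos_part_thr_value_less:
  assumes \<mu>: "0 < \<mu>" and v: "v \<in> {0<..vbar}"
  shows "max (thr_value \<mu> v) 0 < (\<integral>p. pac_gain \<mu> v p \<partial>G)"
proof -
  have w: "v / (1 + \<mu>) < v" "0 < v / (1 + \<mu>)" using v \<mu> by (auto simp: divide_less_eq)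
  have int: "integrable G (thr_gain \<mu> v)" "integrable G (pac_gain \<mu> v)"
    using \<mu> by (auto intro: integrable_G_thr_gain integrable_G_pac_gain)
  have "0 < (\<integral>p. pac_gain \<mu> v p - thr_gain \<mu> v p \<partial>G)"
  proof (rule integral_G_pos[of _ "v / (1 + \<mu>)" v])
    fix p assume "p \<in> {v / (1 + \<mu>)<..<v}"
    moreover from this have "v < (1 + \<mu>) * p" using \<mu> by (auto simp: divide_less_eq mult.commute)
    ultimately show "0 < pac_gain \<mu> v p - thr_gain \<mu> v p" by (auto simp: pac_gain_def thr_gain_def)
  next
    show "integrable G (\<lambda>p. pac_gain \<mu> v p - thr_gain \<mu> v p)" using int by auto
  qed (use w v in \<open>auto simp: pac_gain_def thr_gain_def\<close>)
  then have "thr_value \<mu> v < (\<integral>p. pac_gain \<mu> v p \<partial>G)"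
    unfolding thr_value_def using int by simp
  moreover have "0 < (\<integral>p. pac_gain \<mu> v p \<partial>G)"
  proof (rule integral_G_pos[OF int(2) pac_gain_nonneg, of 0 "v / (1 + \<mu>)"])
    fix p assume "p \<in> {0<..<v / (1 + \<mu>)}"
    then have "(1 + \<mu>) * p < v" using \<mu> by (auto simp: less_divide_eq mult.commute)
    then show "0 < pac_gain \<mu> v p" by (simp add: pac_gain_def)
  qed (use w v in auto)
  ultimately show ?thesis by simp
qed

lemma thr_dual_less_pac_dual:
  assumes \<mu>: "0 < \<mu>"
  shows "thr_dual \<mu> < pac_dual \<mu>"
proof -
  have "(\<integral>v. max (thr_value \<mu> v) 0 \<partial>F) < (\<integral>v. (\<integral>p. pac_gain \<mu> v p \<partial>G) \<partial>F)"
  proof (rule F.integral_less_AE[where A="{0<..vbar}"])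
    show "integrable F (\<lambda>v. max (thr_value \<mu> v) 0)"
      using integrable_thr_value \<mu> by (intro integrable_max) auto
    show "integrable F (\<lambda>v. \<integral>p. pac_gain \<mu> v p \<partial>G)"
      using K.integrable_fst'[OF integrable_K_pac_gain] \<mu> by simp
    show "AE v in F. v \<in> {0<..vbar} \<longrightarrow> max (thr_value \<mu> v) 0 \<noteq> (\<integral>p. pac_gain \<mu> v p \<partial>G)"
      using pos_part_thr_value_less[OF \<mu>] by (intro AE_I2) (metis less_irrefl)
    show "AE v in F. max (thr_value \<mu> v) 0 \<le> (\<integral>p. pac_gain \<mu> v p \<partial>G)"
      using pos_part_thr_value_le \<mu> by simp
  qed (use emeasure_F_pos in \<open>auto simp: F_sets\<close>)
  then show ?thesis using \<mu> by (simp add: thr_dual_def pac_dual_eq)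
qed

lemma pac_dual_nonneg: "0 \<le> \<mu> \<Longrightarrow> 0 \<le> pac_dual \<mu>"
  unfolding pac_dual_def using rho_pos by (intro add_nonneg_nonneg integral_nonneg) (auto simp: pac_gain_nonneg)

lemma pac_dual_lipschitz:
  assumes a: "0 \<le> a" and b: "0 \<le> b"
  shows "\<bar>pac_dual a - pac_dual b\<bar> \<le> (vbar + \<rho>) * \<bar>a - b\<bar>"
proof -
  define D where "D = (\<integral>x. pac_gain a (fst x) (snd x) - pac_gain b (fst x) (snd x) \<partial>K)"
  have p_int: "integrable K (\<lambda>x. \<bar>snd x\<bar>)"
    using AE_K by (intro K.integrable_const_bound[where B=vbar]) (auto elim: AE_mp)
  have "\<bar>D\<bar> \<le> (\<integral>x. \<bar>a - b\<bar> * \<bar>snd x\<bar> \<partial>K)"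
    unfolding D_def using integrable_K_pac_gain[OF a] integrable_K_pac_gain[OF b] p_int
    by (intro integral_abs_bound_integral abs_pac_gain_diff_le) auto
  also have "\<dots> = \<bar>a - b\<bar> * (\<integral>x. \<bar>snd x\<bar> \<partial>K)" by simp
  also have "\<dots> \<le> \<bar>a - b\<bar> * vbar"
    using AE_K by (intro mult_left_mono K.integral_le_const p_int) (auto elim: AE_mp)
  finally have D: "\<bar>D\<bar> \<le> \<bar>a - b\<bar> * vbar" .
  have "pac_dual a - pac_dual b = D + (a - b) * \<rho>"
    unfolding D_def using integrable_K_pac_gain[OF a] integrable_K_pac_gain[OF b]
    by (simp add: pac_dual_def algebra_simps)
  then have "\<bar>pac_dual a - pac_dual b\<bar> \<le> \<bar>D\<bar> + \<bar>a - b\<bar> * \<rho>"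
    using abs_triangle_ineq[of D "(a - b) * \<rho>"] rho_pos by (simp add: abs_mult)
  then show ?thesis using D by (simp add: algebra_simps)
qed

lemma continuous_on_pac_dual: "continuous_on {0..M} pac_dual"
proof (rule lipschitz_on_continuous_on)
  show "(vbar + \<rho>)-lipschitz_on {0..M} pac_dual"
    using pac_dual_lipschitz vbar_pos rho_pos by (intro lipschitz_onI) (auto simp: dist_real_def)
qed

definition spend_margin :: "real \<Rightarrow> real" where
  "spend_margin \<delta> = (\<integral>x. (if (1 + \<delta>) * snd x \<le> fst x then snd x else 0) \<partial>K)"

lemma tendsto_spend_margin:
  "(\<lambda>n. spend_margin (1 / real (Suc n))) \<longlonglongrightarrow> (\<integral>x. (if snd x < fst x then snd x else 0) \<partial>K)"
  unfolding spend_margin_def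
proof (rule integral_dominated_convergence[where w="\<lambda>_. vbar"])
  show "AE x in K. norm (if (1 + 1 / real (Suc n)) * snd x \<le> fst x then snd x else 0) \<le> vbar" for n
    using AE_K by eventually_elim auto
  show "AE x in K. (\<lambda>n. if (1 + 1 / real (Suc n)) * snd x \<le> fst x then snd x else 0)
      \<longlonglongrightarrow> (if snd x < fst x then snd x else 0)"
    using AE_K by eventually_elim (intro tendsto_eventually eventually_margin_cutoff, auto)
qed auto

lemma pac_dual_le_margin:
  assumes \<delta>: "0 \<le> \<delta>"
  shows "pac_dual \<delta> \<le> pac_dual 0 - \<delta> * (spend_margin \<delta> - \<rho>)"
proof -
  let ?s = "\<lambda>x. if (1 + \<delta>) * snd x \<le> fst x then snd x else 0"
  have s_int: "integrable K ?s"
    using AE_K vbar_pos by (intro K.integrable_const_bound[where B=vbar]) (auto elim!: AE_mp)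
  have "(\<integral>x. pac_gain \<delta> (fst x) (snd x) \<partial>K) \<le> (\<integral>x. pac_gain 0 (fst x) (snd x) - \<delta> * ?s x \<partial>K)"
  proof (rule integral_mono_AE)
    show "AE x in K. pac_gain \<delta> (fst x) (snd x) \<le> pac_gain 0 (fst x) (snd x) - \<delta> * ?s x"
      using AE_K
    proof eventually_elim
      case (elim x)
      then show ?case using pac_gain_le_margin[OF \<delta>, of "snd x" "fst x"] by simp
    qed
  qed (use integrable_K_pac_gain[OF \<delta>] integrable_K_pac_gain[of 0] s_int in auto)
  then show ?thesis
    using integrable_K_pac_gain[of 0] s_int by (simp add: pac_dual_def spend_margin_def algebra_simps)
qed

lemma pac_dual_decreasing_near_0:
  assumes M: "0 < M"
  shows "\<exists>\<delta>. 0 < \<delta> \<and> \<delta> \<le> M \<and> pac_dual \<delta> < pac_dual 0"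
proof -
  have "\<forall>\<^sub>F n in sequentially. \<rho> < spend_margin (1 / real (Suc n))"
    using order_tendstoD(1)[OF tendsto_spend_margin spend_strict] .
  moreover have "\<forall>\<^sub>F n in sequentially. 1 / real (Suc n) < M"
    using order_tendstoD(2)[OF LIMSEQ_Suc[OF lim_const_over_n] M] by simp
  ultimately obtain n where n: "\<rho> < spend_margin (1 / real (Suc n))" "1 / real (Suc n) < M"
    using eventually_happens'[OF sequentially_bot] eventually_conj by blast
  have "0 < 1 / real (Suc n) * (spend_margin (1 / real (Suc n)) - \<rho>)"
    using n(1) by simp
  then have "pac_dual (1 / real (Suc n)) < pac_dual 0"
    using pac_dual_le_margin[of "1 / real (Suc n)"] by simp
  then show ?thesis using n(2) by (intro exI[of _ "1 / real (Suc n)"]) auto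
qed

lemma pac_dual_min_gap:
  assumes M: "0 < M"
  shows "\<exists>\<mu>0 m. 0 \<le> \<mu>0 \<and> 0 \<le> m \<and> (\<forall>\<mu>. 0 \<le> \<mu> \<longrightarrow> \<mu> \<le> M \<longrightarrow> m \<le> pac_dual \<mu>) \<and> thr_dual \<mu>0 < m"
proof -
  obtain \<mu>0 where \<mu>0: "\<mu>0 \<in> {0..M}" "\<And>\<mu>. \<mu> \<in> {0..M} \<Longrightarrow> pac_dual \<mu>0 \<le> pac_dual \<mu>"
    using continuous_attains_inf[OF compact_Icc _ continuous_on_pac_dual[of M]] M by auto
  have "\<mu>0 \<noteq> 0"
  proof
    assume "\<mu>0 = 0"
    moreover obtain \<delta> where "0 < \<delta>" "\<delta> \<le> M" "pac_dual \<delta> < pac_dual 0"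
      using pac_dual_decreasing_near_0[OF M] by blast
    ultimately show False using \<mu>0(2)[of \<delta>] by auto
  qed
  then have "thr_dual \<mu>0 < pac_dual \<mu>0"
    using \<mu>0(1) by (intro thr_dual_less_pac_dual) auto
  then show ?thesis
    using \<mu>0 pac_dual_nonneg[of \<mu>0] by (intro exI[of _ \<mu>0] exI[of _ "pac_dual \<mu>0"]) auto
qed

lemma pac_exp_minus_thr_opt_ge_linear:
  assumes a: "0 < a1" "0 < a2"
    and eps_order: "\<forall>T\<ge>1. a1 / sqrt (real T) \<le> eps T \<and> eps T \<le> a2 / sqrt (real T)"
    and mubar: "vbar / \<rho> \<le> \<mu>bar" and mu1: "0 \<le> \<mu>1" "\<mu>1 \<le> \<mu>bar"
  shows "\<exists>c>0. \<exists>T0. \<forall>T\<ge>T0. c * real T \<le> pac_exp eps \<rho> \<mu>bar \<mu>1 F G T - thr_opt full F G \<rho> T"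
proof -
  have "0 < vbar / \<rho>" using vbar_pos rho_pos by simp
  then obtain \<mu>0 m where \<mu>0: "0 \<le> \<mu>0" and m: "0 \<le> m" "\<And>\<mu>. 0 \<le> \<mu> \<Longrightarrow> \<mu> \<le> \<mu>bar \<Longrightarrow> m \<le> pac_dual \<mu>"
    and gap: "thr_dual \<mu>0 < m"
    using pac_dual_min_gap[of \<mu>bar] mubar by force
  obtain C T1 where pac: "\<And>T. T1 \<le> T \<Longrightarrow> real T * m - C * sqrt (real T) \<le> pac_exp eps \<rho> \<mu>bar \<mu>1 F G T"
    using pac_exp_ge_sqrt[OF a eps_order mubar mu1 m] by blast
  define \<delta> where "\<delta> = m - thr_dual \<mu>0"
  have \<delta>: "0 < \<delta>" using gap by (simp add: \<delta>_def)
  have linear: "\<delta> / 2 * real T \<le> pac_exp eps \<rho> \<mu>bar \<mu>1 F G T - thr_opt full F G \<rho> T"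
    if T: "max T1 (nat \<lceil>(2 * C / \<delta>)\<^sup>2\<rceil>) \<le> T" for T
  proof -
    have "C * sqrt (real T) \<le> \<delta> / 2 * real T"
      using T by (intro mult_sqrt_le_half_linear[OF \<delta>]) linarith
    moreover have "real T * m - real T * thr_dual \<mu>0 = \<delta> * real T" by (simp add: \<delta>_def algebra_simps)
    ultimately show ?thesis
      using pac[of T] thr_opt_bounds(2)[OF \<mu>0, of full T] T by linarith
  qed
  show ?thesis
  proof (intro exI[of _ "\<delta> / 2"] conjI exI[of _ "max T1 (nat \<lceil>(2 * C / \<delta>)\<^sup>2\<rceil>)"] allI impI)
    show "0 < \<delta> / 2" using \<delta> by simp
  qed (rule linear)
qed

end

theorem theorem8:
  fixes F G :: "real measure" and vbar \<rho> L a1 a2 \<mu>bar \<mu>1 :: real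
    and eps :: "nat \<Rightarrow> real" and full :: bool
  assumes vbar_pos: "vbar > 0" and rho_pos: "0 < \<rho>" and rho_le: "\<rho> \<le> vbar"
    and F_prob: "prob_space F" and F_sets: "sets F = sets borel"
    and F_supp: "measure F {0..vbar} = 1"
    and G_prob: "prob_space G" and G_sets: "sets G = sets borel"
    and G_supp: "measure G {0..vbar} = 1"
    and L_pos: "L > 0"
    and G_dens: "\<exists>g. g \<in> borel_measurable lborel \<and> (\<forall>x. 0 \<le> g x)
                   \<and> G = density lborel (\<lambda>x. ennreal (g x)) \<and> (\<forall>x\<in>{0..vbar}. L \<le> g x)"
    and ratio: "\<forall>lam>0. measure F {v\<in>{0<..vbar}. rfun G v / cfun G v \<noteq> lam} > 0"
    and spend: "(\<integral>vp. (if fst vp \<ge> snd vp then snd vp else 0) \<partial>(F \<Otimes>\<^sub>M G)) > \<rho>"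
    and a_pos: "a1 > 0" "a2 > 0"
    and eps_order: "\<forall>T\<ge>1. a1 / sqrt (real T) \<le> eps T \<and> eps T \<le> a2 / sqrt (real T)"
    and mubar: "\<mu>bar \<ge> vbar / \<rho>" and mu1: "0 \<le> \<mu>1" "\<mu>1 \<le> \<mu>bar"
  shows "\<exists>C1>0. \<exists>C2>0. \<exists>T0::nat. \<forall>T\<ge>T0.
           C1 * real T \<le> pac_exp eps \<rho> \<mu>bar \<mu>1 F G T - thr_opt full F G \<rho> T \<and>
           pac_exp eps \<rho> \<mu>bar \<mu>1 F G T - thr_opt full F G \<rho> T \<le> C2 * real T"
proof -
  obtain g where g: "g \<in> borel_measurable lborel" "\<And>x. 0 \<le> g x" "G = density lborel (\<lambda>x. ennreal (g x))"
    "\<And>x. x \<in> {0..vbar} \<Longrightarrow> L \<le> g x"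
    using G_dens by blast
  interpret dense_auction_setting F G vbar \<rho> L g
    by (intro dense_auction_setting.intro auction_setting.intro dense_auction_setting_axioms.intro)
      (fact | rule g)+
  obtain c T0 where "0 < c"
    and lower: "\<And>T. T0 \<le> T \<Longrightarrow> c * real T \<le> pac_exp eps \<rho> \<mu>bar \<mu>1 F G T - thr_opt full F G \<rho> T"
    using pac_exp_minus_thr_opt_ge_linear[OF a_pos eps_order mubar mu1] by blast
  have upper: "pac_exp eps \<rho> \<mu>bar \<mu>1 F G T - thr_opt full F G \<rho> T \<le> vbar * real T" for T
    using pac_exp_le[of eps \<mu>bar \<mu>1 T] thr_opt_bounds(1)[of 0 full T] by linarith
  show ?thesis
    using \<open>0 < c\<close> vbar_pos lower upper by blast
qed

end
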